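(* Let $F$ be a VSCC (over linear profiles) satisfying Anonymity, Neutrality, Upward Homogeneity (in particular, if it satisfies Homogeneity), Neutral Reversal, Monotonicity for two-candidate profiles (in particular, if it satisfies Monotonicity), and Coherent IIA. Then $SC(\mathbf P)\subseteq F(\mathbf P)$ for every profile $\mathbf P$, where $SC$ is the Split Cycle VSCC.
   Context: Profiles: $\mathbf P:V\to\mathcal L(X)$ with $V$ a nonempty finite set of voters, $X=X(\mathbf P)$ a nonempty finite set of candidates (from fixed infinite sets), $\mathcal L(X)$ strict linear orders; $\mathbf P_{|Y}$ restricts ballots to $Y$. $\mathrm{Margin}_{\mathbf P}(x,y)$ = #voters ranking $x$ above $y$ minus #ranking $y$ above $x$. $\mathcal M(\mathbf P)$: directed graph on $X(\mathbf P)$ with edge $x\to y$ of weight $\mathrm{Margin}_{\mathbf P}(x,y)$ when positive. Majority path: sequence of candidates with positive consecutive margins; strength = minimum of those margins. $(x,y)\in sc(\mathbf P)$ iff $\mathrm{Margin}_{\mathbf P}(x,y)>0$ and it exceeds the strength of every majority path from $y$ to $x$; $SC(\mathbf P)$ = candidates $y$ such that no $x$ has $(x,y)\in sc(\mathbf P)$. A VSCC is $F$ with $\varnothing\ne F(\mathbf P)\subseteq X(\mathbf P)$. Axioms: Anonymity (permuting which voter casts which ballot, same voter set, leaves $F$ unchanged); Neutrality (if a bijection $\pi$ of candidates transforms $\mathbf P$ into $\mathbf P'$ ballot by ballot, with same voters and candidates, then $x\in F(\mathbf P)\iff\pi(x)\in F(\mathbf P')$); Homogeneity $F(\mathbf P)=F(2\mathbf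 P)$, Upward Homogeneity $F(\mathbf P)\supseteq F(2\mathbf P)$ ($2\mathbf P$ replaces each voter by two copies); Neutral Reversal (adding two voters with converse ballots leaves $F$ unchanged); Monotonicity (resp. for two-candidate profiles): for any profile (resp. two-candidate profile), if $\mathbf P'$ is obtained by swapping $x$ with the candidate immediately above it in one ballot, $x\in F(\mathbf P)$ implies $x\in F(\mathbf P')$; Coherent IIA: write $\mathbf P\rightsquigarrow_{x,y}\mathbf P'$ if $\mathbf P_{|\{x,y\}}=\mathbf P'_{|\{x,y\}}$ and $\mathcal M(\mathbf P')$ is obtainable from $\mathcal M(\mathbf P)$ by deleting zero or more candidates other than $x,y$ and deleting or reducing weights of zero or more edges not connecting $x$ and $y$; if $y\notin F(\mathbf P)$ then some $x\in X(\mathbf P)$ satisfies $y\notin F(\mathbf P')$ for all $\mathbf P'$ with $\mathbf P\rightsquigarrow_{x,y}\mathbf P'$. *)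

theory Defs
  imports Main
begin

text \<open>A profile: voter set, candidate set, and a ballot for each voter.
  A ballot is a relation; (a,b) \<in> ballot P i means voter i ranks a above b.\<close>

record ('v, 'c) profile =
  voters :: "'v set"
  cands  :: "'c set"
  ballot :: "'v \<Rightarrow> 'c rel"

definition wf_profile :: "('v, 'c) profile \<Rightarrow> bool" where
  "wf_profile P \<longleftrightarrow>
     finite (voters P) \<and> voters P \<noteq> {} \<and> finite (cands P) \<and> cands P \<noteq> {} \<and>
     (\<forall>i\<in>voters P. ballot P i \<subseteq> cands P \<times> cands P \<and>
                    strict_linear_order_on (cands P) (ballot P i)) \<and>
     (\<forall>i. i \<notin> voters P \<longrightarrow> ballot P i = {})"

definition margin :: "('v, 'c) profile \<Rightarrow> 'c \<Rightarrow> 'c \<Rightarrow> int" where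
  "margin P x y =
     int (card {i \<in> voters P. (x, y) \<in> ballot P i}) - int (card {i \<in> voters P. (y, x) \<in> ballot P i})"

definition majority_path :: "('v, 'c) profile \<Rightarrow> 'c list \<Rightarrow> 'c \<Rightarrow> 'c \<Rightarrow> bool" where
  "majority_path P cs a b \<longleftrightarrow>
     length cs \<ge> 2 \<and> set cs \<subseteq> cands P \<and> hd cs = a \<and> last cs = b \<and>
     (\<forall>k. Suc k < length cs \<longrightarrow> margin P (cs ! k) (cs ! Suc k) > 0)"

definition path_strength :: "('v, 'c) profile \<Rightarrow> 'c list \<Rightarrow> int" where
  "path_strength P cs = Min {margin P (cs ! k) (cs ! Suc k) | k. Suc k < length cs}"

definition sc_defeat :: "('v, 'c) profile \<Rightarrow> 'c \<Rightarrow> 'c \<Rightarrow> bool" where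
  "sc_defeat P x y \<longleftrightarrow>
     margin P x y > 0 \<and> (\<forall>cs. majority_path P cs y x \<longrightarrow> margin P x y > path_strength P cs)"

definition split_cycle :: "('v, 'c) profile \<Rightarrow> 'c set" where
  "split_cycle P = {y \<in> cands P. \<not> (\<exists>x. sc_defeat P x y)}"

definition VSCC :: "(('v, 'c) profile \<Rightarrow> 'c set) \<Rightarrow> bool" where
  "VSCC F \<longleftrightarrow> (\<forall>P. wf_profile P \<longrightarrow> F P \<noteq> {} \<and> F P \<subseteq> cands P)"

definition anonymity :: "(('v, 'c) profile \<Rightarrow> 'c set) \<Rightarrow> bool" where
  "anonymity F \<longleftrightarrow> (\<forall>P P' \<sigma>. wf_profile P \<and> wf_profile P' \<and>
      voters P' = voters P \<and> cands P' = cands P \<and> bij_betw \<sigma> (voters P) (voters P) \<and>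
      (\<forall>i\<in>voters P. ballot P' i = ballot P (\<sigma> i)) \<longrightarrow> F P' = F P)"

definition neutrality :: "(('v, 'c) profile \<Rightarrow> 'c set) \<Rightarrow> bool" where
  "neutrality F \<longleftrightarrow> (\<forall>P P' \<pi>. wf_profile P \<and> wf_profile P' \<and>
      voters P' = voters P \<and> cands P' = cands P \<and> bij_betw \<pi> (cands P) (cands P) \<and>
      (\<forall>i\<in>voters P. ballot P' i = (\<lambda>(a, b). (\<pi> a, \<pi> b)) ` ballot P i) \<longrightarrow>
      (\<forall>x\<in>cands P. x \<in> F P \<longleftrightarrow> \<pi> x \<in> F P'))"

definition doubling :: "('v, 'c) profile \<Rightarrow> ('v, 'c) profile \<Rightarrow> bool" where
  "doubling P P' \<longleftrightarrow> cands P' = cands P \<and>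
     (\<exists>f. f ` voters P' = voters P \<and>
          (\<forall>i\<in>voters P. card {j \<in> voters P'. f j = i} = 2) \<and>
          (\<forall>j\<in>voters P'. ballot P' j = ballot P (f j)))"

definition homogeneity :: "(('v, 'c) profile \<Rightarrow> 'c set) \<Rightarrow> bool" where
  "homogeneity F \<longleftrightarrow> (\<forall>P P'. wf_profile P \<and> wf_profile P' \<and> doubling P P' \<longrightarrow> F P' = F P)"

definition upward_homogeneity :: "(('v, 'c) profile \<Rightarrow> 'c set) \<Rightarrow> bool" where
  "upward_homogeneity F \<longleftrightarrow> (\<forall>P P'. wf_profile P \<and> wf_profile P' \<and> doubling P P' \<longrightarrow> F P' \<subseteq> F P)"

definition neutral_reversal :: "(('v, 'c) profile \<Rightarrow> 'c set) \<Rightarrow> bool" where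
  "neutral_reversal F \<longleftrightarrow> (\<forall>P P' i j. wf_profile P \<and> wf_profile P' \<and>
      i \<notin> voters P \<and> j \<notin> voters P \<and> i \<noteq> j \<and>
      voters P' = voters P \<union> {i, j} \<and> cands P' = cands P \<and>
      ballot P' j = converse (ballot P' i) \<and>
      (\<forall>k\<in>voters P. ballot P' k = ballot P k) \<longrightarrow> F P' = F P)"

definition immediately_above :: "'c rel \<Rightarrow> 'c \<Rightarrow> 'c \<Rightarrow> bool" where
  "immediately_above R y x \<longleftrightarrow> (y, x) \<in> R \<and> \<not> (\<exists>z. (y, z) \<in> R \<and> (z, x) \<in> R)"

definition swap_up :: "'c rel \<Rightarrow> 'c \<Rightarrow> 'c \<Rightarrow> 'c rel" where
  "swap_up R y x = (R - {(y, x)}) \<union> {(x, y)}"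

definition monotonicity :: "(('v, 'c) profile \<Rightarrow> 'c set) \<Rightarrow> bool" where
  "monotonicity F \<longleftrightarrow> (\<forall>P P' i x y. wf_profile P \<and> i \<in> voters P \<and>
      immediately_above (ballot P i) y x \<and>
      voters P' = voters P \<and> cands P' = cands P \<and>
      ballot P' = (ballot P)(i := swap_up (ballot P i) y x) \<and> x \<in> F P \<longrightarrow> x \<in> F P')"

definition monotonicity_two :: "(('v, 'c) profile \<Rightarrow> 'c set) \<Rightarrow> bool" where
  "monotonicity_two F \<longleftrightarrow> (\<forall>P P' i x y. wf_profile P \<and> card (cands P) = 2 \<and> i \<in> voters P \<and>
      immediately_above (ballot P i) y x \<and>
      voters P' = voters P \<and> cands P' = cands P \<and>
      ballot P' = (ballot P)(i := swap_up (ballot P i) y x) \<and> x \<in> F P \<longrightarrow> x \<in> F P')"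

definition coherent_step :: "('v, 'c) profile \<Rightarrow> 'c \<Rightarrow> 'c \<Rightarrow> ('v, 'c) profile \<Rightarrow> bool" where
  "coherent_step P x y P' \<longleftrightarrow>
     voters P' = voters P \<and> x \<in> cands P' \<and> y \<in> cands P' \<and> cands P' \<subseteq> cands P \<and>
     (\<forall>i\<in>voters P. ballot P' i \<inter> ({x, y} \<times> {x, y}) = ballot P i \<inter> ({x, y} \<times> {x, y})) \<and>
     (\<forall>a\<in>cands P'. \<forall>b\<in>cands P'. margin P' a b > 0 \<longrightarrow>
        margin P a b > 0 \<and> margin P' a b \<le> margin P a b \<and>
        ({a, b} = {x, y} \<longrightarrow> margin P' a b = margin P a b)) \<and>
     (margin P x y > 0 \<longrightarrow> margin P' x y = margin P x y) \<and>
     (margin P y x > 0 \<longrightarrow> margin P' y x = margin P y x)"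

definition coherent_IIA :: "(('v, 'c) profile \<Rightarrow> 'c set) \<Rightarrow> bool" where
  "coherent_IIA F \<longleftrightarrow> (\<forall>P y. wf_profile P \<and> y \<in> cands P \<and> y \<notin> F P \<longrightarrow>
      (\<exists>x\<in>cands P. \<forall>P'. wf_profile P' \<and> coherent_step P x y P' \<longrightarrow> y \<notin> F P'))"

end

theory Submission
  imports Defs
begin

text \<open>Suppose \<open>y \<in> SC(P)\<close> but \<open>y \<notin> F(P)\<close>. Doubling \<open>P\<close> (Upward Homogeneity) and adding reversal
  pairs (Neutral Reversal) preserve this situation and \<open>SC\<close>, but make all margins even and give \<open>y\<close>
  arbitrarily many voters ranking it above any other candidate. Coherent IIA provides an \<open>x\<close> such
  that \<open>y\<close> loses in every \<open>P'\<close> with \<open>P \<rightsquigarrow>\<^sub>x\<^sub>,\<^sub>y P'\<close>, and we exhibit such a \<open>P'\<close> electing \<open>y\<close>.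
  If \<open>Margin(x, y) \<le> 0\<close>, restrict \<open>P\<close> to \<open>{x, y}\<close>: there \<open>y\<close> wins a tie by Anonymity and
  Neutrality, hence any nonnegative margin by Monotonicity for two candidates and Upward
  Homogeneity. If \<open>Margin(x, y) = 2m > 0\<close>, then as \<open>y\<close> is undefeated there is a simple majority path \<open>y = c\<^sub>0 \<rightarrow> \<dots> \<rightarrow> c\<^sub>k\<^sub>-\<^sub>1 = x\<close> of strength
  at least \<open>2m\<close>. Re-ballot the voters of \<open>P\<close>, keeping each one's preference between \<open>x\<close> and \<open>y\<close>:
  \<open>2mk\<close> of them get cyclic ballots producing margin \<open>2m\<close> exactly on the edges of the cycle
  \<open>c\<^sub>0 \<rightarrow> \<dots> \<rightarrow> c\<^sub>k\<^sub>-\<^sub>1 \<rightarrow> c\<^sub>0\<close>, and the others form reversal pairs. This is a coherent step, and by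
  Neutral Reversal its winners are those of the cyclic part, which is invariant under rotating the
  cycle; so every \<open>c\<^sub>i\<close>, in particular \<open>y\<close>, wins.\<close>

section \<open>Margins and well-formed profiles\<close>

definition ballot_margin :: "'c rel \<Rightarrow> 'c \<Rightarrow> 'c \<Rightarrow> int" where
  "ballot_margin R a b = (if (a, b) \<in> R then 1 else 0) - (if (b, a) \<in> R then 1 else 0)"

lemma ballot_margin_converse: "ballot_margin (R\<inverse>) a b = - ballot_margin R a b"
  by (simp add: ballot_margin_def)

lemma sum_ballot_margin:
  assumes "finite J"
  shows "(\<Sum>j\<in>J. ballot_margin (B j) a b) =
    int (card {j \<in> J. (a, b) \<in> B j}) - int (card {j \<in> J. (b, a) \<in> B j})"
  using assms by (simp add: ballot_margin_def sum_subtractf flip: sum.inter_filter)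

lemma margin_eq_sum:
  "finite (voters P) \<Longrightarrow> margin P a b = (\<Sum>v\<in>voters P. ballot_margin (ballot P v) a b)"
  by (simp add: margin_def sum_ballot_margin)

lemma margin_ballot_update:
  assumes "finite (voters P)" "v \<in> voters P"
  shows "margin (P\<lparr>ballot := (ballot P)(v := R)\<rparr>) a b =
    margin P a b - ballot_margin (ballot P v) a b + ballot_margin R a b"
proof -
  let ?B = "(ballot P)(v := R)" and ?m = "\<lambda>B w. ballot_margin (B w) a b"
  have "(\<Sum>w\<in>voters P - {v}. ?m ?B w) = (\<Sum>w\<in>voters P - {v}. ?m (ballot P) w)"
    by (rule sum.cong) auto
  also have "\<dots> = margin P a b - ?m (ballot P) v"
    unfolding margin_eq_sum[OF assms(1)] sum.remove[OF assms, of "?m (ballot P)"] by simp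
  finally have "(\<Sum>w\<in>voters P. ?m ?B w) = ballot_margin R a b + (margin P a b - ?m (ballot P) v)"
    using sum.remove[OF assms, of "?m ?B"] by simp
  then show ?thesis
    using margin_eq_sum[of "P\<lparr>ballot := ?B\<rparr>"] assms(1) by simp
qed

lemma margin_antisym: "margin P a b = - margin P b a"
  by (simp add: margin_def)

lemma margin_le_card_voters: "finite (voters P) \<Longrightarrow> margin P a b \<le> int (card (voters P))"
  unfolding margin_def using card_mono[of "voters P" "{i \<in> voters P. (a, b) \<in> ballot P i}"] by auto

lemma margin_eq_if_Int_pair_eq:
  assumes "voters P' = voters P"
    and "\<And>v. v \<in> voters P \<Longrightarrow> ballot P' v \<inter> {a, b} \<times> {a, b} = ballot P v \<inter> {a, b} \<times> {a, b}"
  shows "margin P' a b = margin P a b"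
proof -
  have "(a, b) \<in> ballot P' v \<longleftrightarrow> (a, b) \<in> ballot P v" "(b, a) \<in> ballot P' v \<longleftrightarrow> (b, a) \<in> ballot P v"
    if "v \<in> voters P" for v
    using assms(2)[OF that] by blast+
  then show ?thesis
    unfolding margin_def assms(1) by (metis (no_types, lifting) Collect_cong)
qed

lemma strict_linear_order_on_converse:
  "strict_linear_order_on C R \<Longrightarrow> strict_linear_order_on C (R\<inverse>)"
  unfolding strict_linear_order_on_def trans_def irrefl_on_def total_on_def by blast

lemma strict_linear_order_on_flip_iff:
  assumes "strict_linear_order_on C R" "a \<in> C" "b \<in> C" "a \<noteq> b"
  shows "(b, a) \<in> R \<longleftrightarrow> (a, b) \<notin> R"
  using assms unfolding strict_linear_order_on_def trans_def irrefl_on_def total_on_def by blast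

lemma strict_linear_order_on_Int_pair_eq:
  assumes "strict_linear_order_on C R" "strict_linear_order_on C' R'"
    and "a \<in> C" "b \<in> C" "a \<in> C'" "b \<in> C'" "a \<noteq> b"
    and "(a, b) \<in> R \<longleftrightarrow> (a, b) \<in> R'"
  shows "R \<inter> {a, b} \<times> {a, b} = R' \<inter> {a, b} \<times> {a, b}"
proof -
  have "(a, a) \<notin> R" "(b, b) \<notin> R" "(a, a) \<notin> R'" "(b, b) \<notin> R'"
    using assms(1,2) unfolding strict_linear_order_on_def irrefl_on_def by auto
  moreover have "(b, a) \<in> R \<longleftrightarrow> (b, a) \<in> R'"
    using strict_linear_order_on_flip_iff[OF assms(1,3,4,7)]
      strict_linear_order_on_flip_iff[OF assms(2,5,6,7)] assms(8) by blast
  ultimately show ?thesis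
    using assms(8) by blast
qed

lemma card_prefers_add_card_prefers:
  assumes "finite J" "\<And>j. j \<in> J \<Longrightarrow> strict_linear_order_on C (B j)" "a \<in> C" "b \<in> C" "a \<noteq> b"
  shows "card {j \<in> J. (a, b) \<in> B j} + card {j \<in> J. (b, a) \<in> B j} = card J"
proof -
  have "J = {j \<in> J. (a, b) \<in> B j} \<union> {j \<in> J. (b, a) \<in> B j}"
    "{j \<in> J. (a, b) \<in> B j} \<inter> {j \<in> J. (b, a) \<in> B j} = {}"
    using strict_linear_order_on_flip_iff[OF assms(2) assms(3-5)] by auto
  then show ?thesis
    using assms(1) by (metis card_Un_disjoint finite_Un)
qed

lemma wf_profileD:
  assumes "wf_profile P"
  shows "finite (voters P)" "voters P \<noteq> {}" "finite (cands P)" "cands P \<noteq> {}"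
  using assms unfolding wf_profile_def by auto

lemma wf_profile_ballotD:
  assumes "wf_profile P" "v \<in> voters P"
  shows "strict_linear_order_on (cands P) (ballot P v)" "ballot P v \<subseteq> cands P \<times> cands P"
  using assms unfolding wf_profile_def by auto

lemma wf_profile_ballot_outside: "wf_profile P \<Longrightarrow> v \<notin> voters P \<Longrightarrow> ballot P v = {}"
  unfolding wf_profile_def by auto

lemma wf_profileI:
  assumes "finite V" "V \<noteq> {}" "finite C" "C \<noteq> {}"
    and "\<And>v. v \<in> V \<Longrightarrow> strict_linear_order_on C (B v) \<and> B v \<subseteq> C \<times> C"
    and "\<And>v. v \<notin> V \<Longrightarrow> B v = {}"
  shows "wf_profile \<lparr>voters = V, cands = C, ballot = B\<rparr>"
  using assms unfolding wf_profile_def by auto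

lemma wf_profile_ballot_update:
  assumes "wf_profile P" "v \<in> voters P" "strict_linear_order_on (cands P) R" "R \<subseteq> cands P \<times> cands P"
  shows "wf_profile (P\<lparr>ballot := (ballot P)(v := R)\<rparr>)"
  using assms unfolding wf_profile_def by auto

lemma VSCC_D: "VSCC F \<Longrightarrow> wf_profile P \<Longrightarrow> F P \<noteq> {}" "VSCC F \<Longrightarrow> wf_profile P \<Longrightarrow> F P \<subseteq> cands P"
  unfolding VSCC_def by auto

section \<open>Split Cycle\<close>

lemma le_path_strength_iff:
  assumes "2 \<le> length cs"
  shows "t \<le> path_strength P cs \<longleftrightarrow> (\<forall>k. Suc k < length cs \<longrightarrow> t \<le> margin P (cs ! k) (cs ! Suc k))"
proof -
  have "{margin P (cs ! k) (cs ! Suc k) | k. Suc k < length cs} =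
      (\<lambda>k. margin P (cs ! k) (cs ! Suc k)) ` {..<length cs - 1}"
    by force
  moreover have "{..<length cs - 1} \<noteq> {}"
    using assms by (simp add: lessThan_empty_iff)
  ultimately show ?thesis
    unfolding path_strength_def by (auto simp: less_diff_conv)
qed

lemma sc_defeat_iff:
  "sc_defeat P x y \<longleftrightarrow> margin P x y > 0 \<and>
     (\<forall>cs. majority_path P cs y x \<longrightarrow>
        (\<exists>k. Suc k < length cs \<and> margin P (cs ! k) (cs ! Suc k) < margin P x y))"
  unfolding sc_defeat_def majority_path_def using le_path_strength_iff
  by (metis not_le)

lemma split_cycle_scale:
  assumes "cands Q = cands P" "\<And>a b. margin Q a b = c * margin P a b" "c > 0"
  shows "split_cycle Q = split_cycle P"
proof -
  have "majority_path Q cs a b \<longleftrightarrow> majority_path P cs a b" for cs a b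
    unfolding majority_path_def assms(1,2) using assms(3) by (simp add: zero_less_mult_iff)
  then have "sc_defeat Q a b \<longleftrightarrow> sc_defeat P a b" for a b
    unfolding sc_defeat_iff assms(2) using assms(3) by (simp add: zero_less_mult_iff)
  then show ?thesis
    unfolding split_cycle_def assms(1) by simp
qed

lemma successively_distinct_shortcut:
  "successively R cs \<Longrightarrow> cs \<noteq> [] \<Longrightarrow>
   \<exists>ds. distinct ds \<and> successively R ds \<and> ds \<noteq> [] \<and> hd ds = hd cs \<and> last ds = last cs \<and>
     set ds \<subseteq> set cs"
proof (induction "length cs" arbitrary: cs rule: less_induct)
  case less
  show ?case
  proof (cases "distinct cs")
    case False
    then obtain xs ys zs w where cs: "cs = xs @ [w] @ ys @ [w] @ zs"
      using not_distinct_decomp by blast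
    let ?ds = "xs @ [w] @ zs"
    have "successively R (xs @ [w])" "successively R (w # zs)"
      using less.prems(1) successively_append_iff[of R "xs @ w # ys" "w # zs"]
      unfolding cs by (auto simp: successively_append_iff)
    then have "successively R ?ds"
      by (auto simp: successively_append_iff)
    moreover have "hd ?ds = hd cs" "last ?ds = last cs"
      unfolding cs by (cases xs; simp) (cases zs; simp)
    ultimately show ?thesis
      using less.hyps[of ?ds] unfolding cs by fastforce
  qed (use less.prems in blast)
qed

lemma split_cycle_strong_path:
  assumes "y \<in> split_cycle P" "margin P x y > 0"
  obtains cs where "distinct cs" "3 \<le> length cs" "hd cs = y" "last cs = x" "set cs \<subseteq> cands P"
    "\<And>i. Suc i < length cs \<Longrightarrow> margin P x y \<le> margin P (cs ! i) (cs ! Suc i)"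
proof -
  have "\<not> sc_defeat P x y"
    using assms(1) unfolding split_cycle_def by blast
  then obtain cs where path: "majority_path P cs y x"
    and "\<not> (\<exists>k. Suc k < length cs \<and> margin P (cs ! k) (cs ! Suc k) < margin P x y)"
    using assms(2) unfolding sc_defeat_iff by blast
  then have strong: "\<forall>i. Suc i < length cs \<longrightarrow> margin P x y \<le> margin P (cs ! i) (cs ! Suc i)"
    using leI by blast
  let ?R = "\<lambda>a b. margin P x y \<le> margin P a b"
  have "successively ?R cs" "cs \<noteq> []"
    using path strong unfolding majority_path_def successively_conv_nth by auto
  then obtain ds where ds: "distinct ds" "successively ?R ds" "ds \<noteq> []"
    "hd ds = hd cs" "last ds = last cs" "set ds \<subseteq> set cs"
    using successively_distinct_shortcut by blast
  have ends: "hd ds = y" "last ds = x" and "set ds \<subseteq> cands P"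
    using ds(4-6) path unfolding majority_path_def by auto
  have "3 \<le> length ds"
  proof (rule ccontr)
    assume "\<not> 3 \<le> length ds"
    with ds(3) consider a where "ds = [a]" | a b where "ds = [a, b]"
      by (cases ds rule: remdups_adj.cases) (auto simp: Suc_le_eq)
    then show False
    proof cases
      case 1
      then show False
        using ends assms(2) margin_antisym[of P x x] by simp
    next
      case 2
      then have "?R y x"
        using ds(2) ends by simp
      then show False
        using assms(2) margin_antisym[of P x y] by simp
    qed
  qed
  then show thesis
    using that ds ends \<open>set ds \<subseteq> cands P\<close> successively_nth[OF ds(2)] by blast
qed

section \<open>Operations on profiles\<close>

definition restrict_cands :: "('v, 'c) profile \<Rightarrow> 'c set \<Rightarrow> ('v, 'c) profile" where
  "restrict_cands P S = P\<lparr>cands := S, ballot := \<lambda>v. ballot P v \<inter> S \<times> S\<rparr>"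

lemma restrict_cands_simps [simp]:
  "voters (restrict_cands P S) = voters P" "cands (restrict_cands P S) = S"
  "ballot (restrict_cands P S) v = ballot P v \<inter> S \<times> S"
  by (simp_all add: restrict_cands_def)

lemma wf_profile_restrict_cands:
  assumes "wf_profile P" "S \<subseteq> cands P" "S \<noteq> {}"
  shows "wf_profile (restrict_cands P S)"
proof -
  have "strict_linear_order_on S (ballot P v \<inter> S \<times> S)" if "v \<in> voters P" for v
    using wf_profile_ballotD(1)[OF assms(1) that] assms(2)
    unfolding strict_linear_order_on_def trans_def irrefl_on_def total_on_def by blast
  then show ?thesis
    using assms finite_subset unfolding wf_profile_def by fastforce
qed

lemma coherent_step_restrict_cands:
  assumes "x \<in> S" "y \<in> S" "S \<subseteq> cands P"
  shows "coherent_step P x y (restrict_cands P S)"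
proof -
  have "margin (restrict_cands P S) a b = margin P a b" if "a \<in> S" "b \<in> S" for a b
    using that by (intro margin_eq_if_Int_pair_eq) auto
  then show ?thesis
    using assms unfolding coherent_step_def by auto
qed

lemma coherent_stepI:
  assumes "voters P' = voters P" "x \<in> cands P'" "y \<in> cands P'" "cands P' \<subseteq> cands P"
    and pair: "\<And>v. v \<in> voters P \<Longrightarrow> ballot P' v \<inter> {x, y} \<times> {x, y} = ballot P v \<inter> {x, y} \<times> {x, y}"
    and le: "\<And>a b. a \<in> cands P' \<Longrightarrow> b \<in> cands P' \<Longrightarrow> 0 < margin P' a b \<Longrightarrow> margin P' a b \<le> margin P a b"
  shows "coherent_step P x y P'"
proof -
  have "margin P' x y = margin P x y" "margin P' y x = margin P y x"
    using margin_eq_if_Int_pair_eq[OF assms(1)] pair by (auto simp: insert_commute)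
  then have pair_margin: "margin P' a b = margin P a b" if "{a, b} = {x, y}" for a b
    using that by (auto simp: doubleton_eq_iff)
  show ?thesis
    unfolding coherent_step_def
  proof (intro conjI ballI impI)
    fix a b assume "a \<in> cands P'" "b \<in> cands P'" "0 < margin P' a b"
    then show "margin P' a b \<le> margin P a b" "0 < margin P a b"
      using le[of a b] by simp_all
    show "{a, b} = {x, y} \<Longrightarrow> margin P' a b = margin P a b"
      by (rule pair_margin)
  qed (use assms \<open>margin P' x y = margin P x y\<close> \<open>margin P' y x = margin P y x\<close> in auto)
qed

definition restrict_voters :: "('v, 'c) profile \<Rightarrow> 'v set \<Rightarrow> ('v, 'c) profile" where
  "restrict_voters P W = P\<lparr>voters := W, ballot := \<lambda>v. if v \<in> W then ballot P v else {}\<rparr>"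

lemma restrict_voters_simps [simp]:
  "voters (restrict_voters P W) = W" "cands (restrict_voters P W) = cands P"
  "ballot (restrict_voters P W) v = (if v \<in> W then ballot P v else {})"
  by (simp_all add: restrict_voters_def)

lemma restrict_voters_restrict_voters:
  "W \<subseteq> U \<Longrightarrow> restrict_voters (restrict_voters P U) W = restrict_voters P W"
  unfolding restrict_voters_def by (cases P) (auto simp: fun_eq_iff)

lemma wf_profile_restrict_voters:
  "wf_profile P \<Longrightarrow> W \<subseteq> voters P \<Longrightarrow> W \<noteq> {} \<Longrightarrow> wf_profile (restrict_voters P W)"
  unfolding wf_profile_def by (auto intro: finite_subset)

lemma neutral_reversal_remove_pair:
  assumes "neutral_reversal F" "wf_profile Q" "i \<in> voters Q" "j \<in> voters Q" "i \<noteq> j"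
    and "voters Q - {i, j} \<noteq> {}" "ballot Q j = (ballot Q i)\<inverse>"
  shows "F (restrict_voters Q (voters Q - {i, j})) = F Q"
proof -
  let ?Q0 = "restrict_voters Q (voters Q - {i, j})"
  have "wf_profile ?Q0"
    using assms(2,6) by (intro wf_profile_restrict_voters) auto
  moreover have "voters Q = voters ?Q0 \<union> {i, j}"
    using assms(3,4) by auto
  ultimately show ?thesis
    using assms(1)[unfolded neutral_reversal_def, rule_format, of ?Q0 Q i j] assms(2,5,7) by auto
qed

lemma neutral_reversal_remove_pairs:
  assumes "neutral_reversal F" "finite R"
  shows "wf_profile Q \<Longrightarrow> voters Q = W \<union> R \<union> g ` R \<Longrightarrow> W \<noteq> {} \<Longrightarrow>
    W \<inter> (R \<union> g ` R) = {} \<Longrightarrow> R \<inter> g ` R = {} \<Longrightarrow> inj_on g R \<Longrightarrow>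
    (\<forall>r\<in>R. ballot Q (g r) = (ballot Q r)\<inverse>) \<Longrightarrow> F (restrict_voters Q W) = F Q"
  using assms(2)
proof (induction R arbitrary: Q rule: finite_induct)
  case empty
  then have "restrict_voters Q W = Q"
    using wf_profile_ballot_outside[of Q] by (cases Q) (auto simp: restrict_voters_def fun_eq_iff)
  then show ?case by simp
next
  case (insert r R)
  let ?Q0 = "restrict_voters Q (voters Q - {r, g r})"
  have voters_Q0: "voters Q - {r, g r} = W \<union> R \<union> g ` R"
    using insert.hyps(2) insert.prems(2,4-6) by (auto simp: inj_on_def)
  have "F ?Q0 = F Q"
  proof (rule neutral_reversal_remove_pair[OF assms(1) insert.prems(1)])
    show "r \<in> voters Q" "g r \<in> voters Q" "r \<noteq> g r" "voters Q - {r, g r} \<noteq> {}"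
      using insert.prems(2,3,5) voters_Q0 by auto
    show "ballot Q (g r) = (ballot Q r)\<inverse>"
      using insert.prems(7) by simp
  qed
  moreover have "F (restrict_voters ?Q0 W) = F ?Q0"
  proof (rule insert.IH)
    show "wf_profile ?Q0"
      using insert.prems(3) voters_Q0 by (intro wf_profile_restrict_voters[OF insert.prems(1)]) auto
    show "\<forall>r\<in>R. ballot ?Q0 (g r) = (ballot ?Q0 r)\<inverse>"
      using insert.prems(7) voters_Q0 by auto
  qed (use insert.prems(3-6) voters_Q0 in auto)
  moreover have "restrict_voters ?Q0 W = restrict_voters Q W"
    using voters_Q0 by (intro restrict_voters_restrict_voters) auto
  ultimately show ?case by simp
qed

lemma margin_doubling:
  assumes "wf_profile P" "wf_profile P2" "doubling P P2"
  shows "margin P2 a b = 2 * margin P a b"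
proof -
  obtain f where f: "f ` voters P2 = voters P" "\<And>i. i \<in> voters P \<Longrightarrow> card {j \<in> voters P2. f j = i} = 2"
    "\<And>j. j \<in> voters P2 \<Longrightarrow> ballot P2 j = ballot P (f j)"
    using assms(3) unfolding doubling_def by blast
  let ?m = "\<lambda>i. ballot_margin (ballot P i) a b"
  have fin: "finite (voters P)" "finite (voters P2)"
    using assms(1,2) wf_profileD by blast+
  have "margin P2 a b = (\<Sum>j\<in>voters P2. ?m (f j))"
    using margin_eq_sum[OF fin(2)] f(3) by simp
  also have "\<dots> = (\<Sum>i\<in>voters P. \<Sum>j\<in>{j \<in> voters P2. f j = i}. ?m (f j))"
    using sum.group[OF fin(2,1), of f "\<lambda>j. ?m (f j)"] f(1) by simp
  also have "\<dots> = (\<Sum>i\<in>voters P. 2 * ?m i)"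
    using f(2) by (intro sum.cong) simp_all
  finally show ?thesis
    using margin_eq_sum[OF fin(1)] by (simp add: sum_distrib_left)
qed

lemma ex_doubling:
  fixes P :: "('v, 'c) profile"
  assumes wf: "wf_profile P" and inf: "infinite (UNIV :: 'v set)"
  obtains P2 where "wf_profile P2" "doubling P P2"
proof -
  let ?V = "voters P"
  have fin: "finite ?V"
    using wf_profileD[OF wf] by simp
  obtain W where W: "finite W" "card W = card ?V" "W \<subseteq> - ?V"
    using infinite_arbitrarily_large[of "- ?V" "card ?V"] inf fin by auto
  obtain g where g: "bij_betw g ?V W"
    using finite_same_card_bij[OF fin W(1)] W(2) by metis
  define f where "f j = (if j \<in> ?V then j else the_inv_into ?V g j)" for j
  have f_V: "f j = j" if "j \<in> ?V" for j
    using that by (simp add: f_def)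
  have f_g: "f (g i) = i" if "i \<in> ?V" for i
    using that g W(3) bij_betw_imp_inj_on[OF g] bij_betwE[OF g]
    by (auto simp: f_def the_inv_into_f_f)
  have g_f: "g (f j) = j" if "j \<in> W" for j
    using that W(3) f_the_inv_into_f_bij_betw[OF g] by (auto simp: f_def)
  have f_mem: "f j \<in> ?V" if "j \<in> ?V \<union> W" for j
    using that g W(3) bij_betwE[OF bij_betw_the_inv_into[OF g]] by (auto simp: f_def)
  define P2 where "P2 = \<lparr>voters = ?V \<union> W, cands = cands P,
    ballot = \<lambda>j. if j \<in> ?V \<union> W then ballot P (f j) else {}\<rparr>"
  have "wf_profile P2"
    unfolding P2_def using f_mem W(1) wf_profile_ballotD[OF wf]
    by (intro wf_profileI) (auto simp: wf_profileD[OF wf])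
  moreover have "doubling P P2"
    unfolding doubling_def
  proof (intro conjI exI[of _ f] ballI)
    show "f ` voters P2 = ?V"
      using f_mem by (force simp: P2_def f_def)
    show "card {j \<in> voters P2. f j = i} = 2" if "i \<in> ?V" for i
    proof -
      have "j = i \<or> j = g i" if "j \<in> ?V \<union> W" "f j = i" for j
        using that f_V g_f by (metis UnE)
      then have "{j \<in> voters P2. f j = i} = {i, g i}"
        using \<open>i \<in> ?V\<close> f_V f_g bij_betwE[OF g] by (auto simp: P2_def)
      moreover have "g i \<noteq> i"
        using that bij_betwE[OF g] W(3) by auto
      ultimately show ?thesis by simp
    qed
  qed (simp_all add: P2_def)
  ultimately show thesis ..
qed

lemma margin_add_reversal_pair:
  assumes "finite (voters P)" "i \<notin> voters P" "j \<notin> voters P" "i \<noteq> j"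
    and "voters P1 = voters P \<union> {i, j}" "ballot P1 j = (ballot P1 i)\<inverse>"
    and "\<And>v. v \<in> voters P \<Longrightarrow> ballot P1 v = ballot P v"
  shows "margin P1 a b = margin P a b"
proof -
  have "margin P1 a b = (\<Sum>v\<in>voters P. ballot_margin (ballot P1 v) a b) +
      (ballot_margin (ballot P1 i) a b + ballot_margin (ballot P1 j) a b)"
    using margin_eq_sum[of P1] assms(1-5) by (simp add: algebra_simps)
  also have "(\<Sum>v\<in>voters P. ballot_margin (ballot P1 v) a b) = margin P a b"
    using margin_eq_sum[OF assms(1)] assms(7) by simp
  finally show ?thesis
    using assms(6) by (simp add: ballot_margin_converse)
qed

lemma ex_add_reversal_pair:
  fixes P :: "('v, 'c) profile"
  assumes NR: "neutral_reversal F" and wf: "wf_profile P" and inf: "infinite (UNIV :: 'v set)"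
  obtains P1 where "wf_profile P1" "cands P1 = cands P" "F P1 = F P" "\<And>a b. margin P1 a b = margin P a b"
    "\<And>x y. x \<in> cands P \<Longrightarrow> y \<in> cands P \<Longrightarrow> x \<noteq> y \<Longrightarrow>
      card {v \<in> voters P. (y, x) \<in> ballot P v} < card {v \<in> voters P1. (y, x) \<in> ballot P1 v}"
proof -
  let ?V = "voters P"
  have fin: "finite ?V"
    using wf_profileD[OF wf] by simp
  obtain i j where ij: "i \<notin> ?V" "j \<notin> ?V" "i \<noteq> j"
    by (metis ex_new_if_finite fin finite_insert inf insertCI)
  obtain v0 where "v0 \<in> ?V"
    using wf_profileD[OF wf] by blast
  then have L: "strict_linear_order_on (cands P) (ballot P v0)" "ballot P v0 \<subseteq> cands P \<times> cands P"
    using wf_profile_ballotD[OF wf] by auto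
  define P1 where "P1 = \<lparr>voters = ?V \<union> {i, j}, cands = cands P,
    ballot = (ballot P)(i := ballot P v0, j := (ballot P v0)\<inverse>)\<rparr>"
  have wf1: "wf_profile P1"
    unfolding P1_def using ij L strict_linear_order_on_converse[OF L(1)] wf_profile_ballotD[OF wf]
    by (intro wf_profileI) (auto simp: wf_profileD[OF wf] wf_profile_ballot_outside[OF wf])
  moreover have "F P1 = F P"
  proof -
    have "\<forall>k\<in>?V. ballot P1 k = ballot P k"
      using ij by (auto simp: P1_def)
    then show ?thesis
      using NR[unfolded neutral_reversal_def, rule_format, of P P1 i j] wf wf1 ij by (simp add: P1_def)
  qed
  moreover have "margin P1 a b = margin P a b" for a b
    using fin ij by (intro margin_add_reversal_pair) (auto simp: P1_def)
  moreover have "card {v \<in> ?V. (y, x) \<in> ballot P v} < card {v \<in> voters P1. (y, x) \<in> ballot P1 v}"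
    if "x \<in> cands P" "y \<in> cands P" "x \<noteq> y" for x y
  proof -
    have "(y, x) \<in> ballot P1 i \<or> (y, x) \<in> ballot P1 j"
      using strict_linear_order_on_flip_iff[OF L(1) that] ij by (auto simp: P1_def)
    then obtain w where "w \<in> {i, j}" "(y, x) \<in> ballot P1 w"
      by blast
    have "insert w {v \<in> ?V. (y, x) \<in> ballot P v} \<subseteq> {v \<in> voters P1. (y, x) \<in> ballot P1 v}"
      using \<open>w \<in> {i, j}\<close> \<open>(y, x) \<in> ballot P1 w\<close> ij by (auto simp: P1_def)
    then have "card (insert w {v \<in> ?V. (y, x) \<in> ballot P v}) \<le> card {v \<in> voters P1. (y, x) \<in> ballot P1 v}"
      using fin by (intro card_mono) (simp_all add: P1_def)
    moreover have "w \<notin> ?V"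
      using \<open>w \<in> {i, j}\<close> ij by blast
    ultimately show ?thesis
      using fin by simp
  qed
  ultimately show thesis
    using that by (simp add: P1_def)
qed

lemma ex_reversal_padding:
  fixes P :: "('v, 'c) profile"
  assumes NR: "neutral_reversal F" and wf: "wf_profile P" and inf: "infinite (UNIV :: 'v set)"
  shows "\<exists>P1. wf_profile P1 \<and> cands P1 = cands P \<and> F P1 = F P \<and> (\<forall>a b. margin P1 a b = margin P a b) \<and>
    (\<forall>x\<in>cands P. \<forall>y\<in>cands P. x \<noteq> y \<longrightarrow> t \<le> card {v \<in> voters P1. (y, x) \<in> ballot P1 v})"
proof (induction t)
  case 0
  show ?case
    using wf by blast
next
  case (Suc t)
  then obtain P1 where P1: "wf_profile P1" "cands P1 = cands P" "F P1 = F P"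
    "\<forall>a b. margin P1 a b = margin P a b"
    "\<forall>x\<in>cands P. \<forall>y\<in>cands P. x \<noteq> y \<longrightarrow> t \<le> card {v \<in> voters P1. (y, x) \<in> ballot P1 v}"
    by blast
  obtain P2 where P2: "wf_profile P2" "cands P2 = cands P1" "F P2 = F P1"
    "\<And>a b. margin P2 a b = margin P1 a b"
    "\<And>x y. x \<in> cands P1 \<Longrightarrow> y \<in> cands P1 \<Longrightarrow> x \<noteq> y \<Longrightarrow>
      card {v \<in> voters P1. (y, x) \<in> ballot P1 v} < card {v \<in> voters P2. (y, x) \<in> ballot P2 v}"
    using ex_add_reversal_pair[OF NR P1(1) inf] by blast
  have "Suc t \<le> card {v \<in> voters P2. (y, x) \<in> ballot P2 v}"
    if "x \<in> cands P" "y \<in> cands P" "x \<noteq> y" for x y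
  proof -
    have "t \<le> card {v \<in> voters P1. (y, x) \<in> ballot P1 v}"
      using P1(5) that by blast
    also have "\<dots> < card {v \<in> voters P2. (y, x) \<in> ballot P2 v}"
      using P2(5) P1(2) that by simp
    finally show ?thesis
      by simp
  qed
  then show ?case
    using P1(1-4) P2(1-4) by (intro exI[of _ P2]) simp
qed

section \<open>Symmetric profiles and two-candidate profiles\<close>

lemma anonymity_neutrality_invariant:
  assumes A: "anonymity F" and N: "neutrality F" and wf: "wf_profile Q"
    and \<pi>: "bij_betw \<pi> (cands Q) (cands Q)" and \<sigma>: "bij_betw \<sigma> (voters Q) (voters Q)"
    and ballot_\<sigma>: "\<And>v. v \<in> voters Q \<Longrightarrow> ballot Q (\<sigma> v) = (\<lambda>(a, b). (\<pi> a, \<pi> b)) ` ballot Q v"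
    and a: "a \<in> cands Q"
  shows "a \<in> F Q \<longleftrightarrow> \<pi> a \<in> F Q"
proof -
  \<comment> \<open>Permuting the voters of Q by \<sigma> has the same effect as renaming its candidates by \<pi>.\<close>
  define Q' where "Q' = Q\<lparr>ballot := \<lambda>v. if v \<in> voters Q then ballot Q (\<sigma> v) else {}\<rparr>"
  have "wf_profile Q'"
    using wf bij_betwE[OF \<sigma>] unfolding Q'_def wf_profile_def by auto
  then have "F Q' = F Q"
    using A[unfolded anonymity_def, rule_format, of Q Q' \<sigma>] wf \<sigma> by (auto simp: Q'_def)
  moreover have "a \<in> F Q \<longleftrightarrow> \<pi> a \<in> F Q'"
    using N[unfolded neutrality_def, rule_format, of Q Q' \<pi>] \<open>wf_profile Q'\<close> wf \<pi> a ballot_\<sigma>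
    by (auto simp: Q'_def)
  ultimately show ?thesis
    by simp
qed

lemma ex_bij_betw_exchanging:
  assumes "finite A" "finite B" "A \<inter> B = {}" "card A = card B"
  obtains \<sigma> where "bij_betw \<sigma> (A \<union> B) (A \<union> B)" "\<And>v. v \<in> A \<Longrightarrow> \<sigma> v \<in> B" "\<And>v. v \<in> B \<Longrightarrow> \<sigma> v \<in> A"
proof -
  obtain g where g: "bij_betw g A B"
    using finite_same_card_bij assms by metis
  define \<sigma> where "\<sigma> v = (if v \<in> A then g v else the_inv_into A g v)" for v
  have "bij_betw \<sigma> A B"
    using g by (subst bij_betw_cong[of _ _ g]) (auto simp: \<sigma>_def)
  moreover have "bij_betw \<sigma> B A"
    using bij_betw_the_inv_into[OF g] assms(3) by (subst bij_betw_cong[of _ _ "the_inv_into A g"]) (auto simp: \<sigma>_def)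
  ultimately have "bij_betw \<sigma> (A \<union> B) (B \<union> A)"
    using assms(3) by (intro bij_betw_combine) auto
  then show thesis
    using that \<open>bij_betw \<sigma> A B\<close> \<open>bij_betw \<sigma> B A\<close> by (metis Un_commute bij_betwE)
qed

lemma two_candidate_ballot:
  assumes "wf_profile Q" "cands Q = {x, y}" "x \<noteq> y" "v \<in> voters Q"
  shows "ballot Q v = {(x, y)} \<or> ballot Q v = {(y, x)}"
proof -
  have slo: "strict_linear_order_on {x, y} (ballot Q v)" and "ballot Q v \<subseteq> {x, y} \<times> {x, y}"
    using wf_profile_ballotD[OF assms(1,4)] assms(2) by simp_all
  moreover have "(x, x) \<notin> ballot Q v" "(y, y) \<notin> ballot Q v"
    using slo unfolding strict_linear_order_on_def irrefl_on_def by auto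
  moreover have "(y, x) \<in> ballot Q v \<longleftrightarrow> (x, y) \<notin> ballot Q v"
    using strict_linear_order_on_flip_iff[OF slo _ _ assms(3)] by simp
  ultimately have "ballot Q v \<subseteq> {(x, y), (y, x)}"
    by auto
  then show ?thesis
    using \<open>(y, x) \<in> ballot Q v \<longleftrightarrow> (x, y) \<notin> ballot Q v\<close> by auto
qed

lemma two_candidate_tie:
  assumes A: "anonymity F" and N: "neutrality F" and V: "VSCC F"
    and wf: "wf_profile Q" and cands: "cands Q = {x, y}" and "x \<noteq> y" and tie: "margin Q y x = 0"
  shows "y \<in> F Q"
proof -
  let ?A = "{v \<in> voters Q. ballot Q v = {(x, y)}}" and ?B = "{v \<in> voters Q. ballot Q v = {(y, x)}}"
  have voters: "voters Q = ?A \<union> ?B" "?A \<inter> ?B = {}"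
    using two_candidate_ballot[OF wf cands \<open>x \<noteq> y\<close>] \<open>x \<noteq> y\<close> by auto
  have "?A = {v \<in> voters Q. (x, y) \<in> ballot Q v}" "?B = {v \<in> voters Q. (y, x) \<in> ballot Q v}"
    using two_candidate_ballot[OF wf cands \<open>x \<noteq> y\<close>] \<open>x \<noteq> y\<close> by auto
  then have "card ?A = card ?B"
    using tie by (simp add: margin_def)
  then obtain \<sigma> where \<sigma>: "bij_betw \<sigma> (voters Q) (voters Q)" "\<And>v. v \<in> ?A \<Longrightarrow> \<sigma> v \<in> ?B" "\<And>v. v \<in> ?B \<Longrightarrow> \<sigma> v \<in> ?A"
    using ex_bij_betw_exchanging[of ?A ?B] voters wf_profileD[OF wf] by (metis (no_types, lifting) finite_Un)
  let ?\<pi> = "id(x := y, y := x)"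
  have "bij_betw ?\<pi> (cands Q) (cands Q)"
    unfolding cands bij_betw_def inj_on_def by auto
  moreover have "ballot Q (\<sigma> v) = (\<lambda>(a, b). (?\<pi> a, ?\<pi> b)) ` ballot Q v" if "v \<in> voters Q" for v
  proof -
    have "v \<in> ?A \<or> v \<in> ?B"
      using that voters by blast
    then show ?thesis
      using \<sigma>(2,3)[of v] \<open>x \<noteq> y\<close> by auto
  qed
  ultimately have "x \<in> F Q \<longleftrightarrow> y \<in> F Q"
    using anonymity_neutrality_invariant[OF A N wf _ \<sigma>(1), of ?\<pi> x] cands by simp
  moreover have "F Q \<noteq> {}" "F Q \<subseteq> {x, y}"
    using VSCC_D[OF V wf] cands by auto
  ultimately show ?thesis
    by blast
qed

lemma two_candidate_even_margin:
  assumes A: "anonymity F" and N: "neutrality F" and V: "VSCC F" and M: "monotonicity_two F"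
  shows "wf_profile Q \<Longrightarrow> cands Q = {x, y} \<Longrightarrow> x \<noteq> y \<Longrightarrow> margin Q y x = 2 * int d \<Longrightarrow> y \<in> F Q"
proof (induction d arbitrary: Q)
  case 0
  then show ?case
    using two_candidate_tie[OF A N V] by simp
next
  case (Suc d)
  note wf = Suc.prems(1) and cands = Suc.prems(2) and xy = Suc.prems(3)
  have fin: "finite (voters Q)"
    using wf_profileD[OF wf] by simp
  have "card {v \<in> voters Q. (y, x) \<in> ballot Q v} \<noteq> 0"
    using Suc.prems(4) unfolding margin_def by (intro notI) simp
  then obtain v where "v \<in> voters Q" "(y, x) \<in> ballot Q v"
    by (metis (no_types, lifting) card.empty empty_Collect_eq)
  then have v: "v \<in> voters Q" "ballot Q v = {(y, x)}"
    using two_candidate_ballot[OF wf cands xy] xy by auto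
  \<comment> \<open>Q arises from Q0 by moving y up in the ballot of v.\<close>
  define Q0 where "Q0 = Q\<lparr>ballot := (ballot Q)(v := {(x, y)})\<rparr>"
  have "strict_linear_order_on {x, y} {(x, y)}"
    using xy unfolding strict_linear_order_on_def trans_def irrefl_on_def total_on_def by auto
  then have wf0: "wf_profile Q0"
    unfolding Q0_def using wf_profile_ballot_update[OF wf v(1)] cands by simp
  have "margin Q0 y x = margin Q y x - ballot_margin {(y, x)} y x + ballot_margin {(x, y)} y x"
    unfolding Q0_def using margin_ballot_update[OF fin v(1)] v(2) by simp
  then have "margin Q0 y x = 2 * int d"
    using Suc.prems(4) xy by (simp add: ballot_margin_def)
  then have "y \<in> F Q0"
    using Suc.IH[OF wf0] cands xy by (simp add: Q0_def)
  moreover have "immediately_above (ballot Q0 v) x y"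
    using xy by (simp add: immediately_above_def Q0_def)
  moreover have "swap_up (ballot Q0 v) x y = ballot Q v"
    using v(2) xy by (auto simp: Q0_def swap_up_def)
  then have "ballot Q = (ballot Q0)(v := swap_up (ballot Q0 v) x y)"
    by (simp add: Q0_def)
  moreover have "card (cands Q0) = 2" "voters Q = voters Q0" "cands Q = cands Q0"
    using cands xy by (simp_all add: Q0_def)
  ultimately show ?case
    using M[unfolded monotonicity_two_def, rule_format, of Q0 v x y Q] wf0 v(1) by blast
qed

lemma two_candidate_weak_majority_winner:
  fixes Q :: "('v, 'c) profile"
  assumes A: "anonymity F" and N: "neutrality F" and V: "VSCC F" and M: "monotonicity_two F"
    and U: "upward_homogeneity F" and inf: "infinite (UNIV :: 'v set)"
    and wf: "wf_profile Q" and cands: "cands Q = {x, y}" and "x \<noteq> y" and "margin Q y x \<ge> 0"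
  shows "y \<in> F Q"
proof -
  obtain Q2 where Q2: "wf_profile Q2" "doubling Q Q2"
    using ex_doubling[OF wf inf] by blast
  have "margin Q2 y x = 2 * int (nat (margin Q y x))"
    using margin_doubling[OF wf Q2] \<open>margin Q y x \<ge> 0\<close> by simp
  moreover have "cands Q2 = {x, y}"
    using Q2(2) cands by (simp add: doubling_def)
  ultimately have "y \<in> F Q2"
    using two_candidate_even_margin[OF A N V M Q2(1)] \<open>x \<noteq> y\<close> by blast
  then show ?thesis
    using U[unfolded upward_homogeneity_def] wf Q2(1,2) by blast
qed

section \<open>Replacing the ballots of a profile\<close>

lemma ex_inj_on_into_parts:
  assumes "finite I" "finite J" "finite A" "finite B" "I \<inter> J = {}" "A \<inter> B = {}"
    and "card I \<le> card A" "card J \<le> card B"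
  obtains h where "inj_on h (I \<union> J)" "h ` I \<subseteq> A" "h ` J \<subseteq> B"
proof -
  obtain hI where hI: "hI ` I \<subseteq> A" "inj_on hI I"
    using card_le_inj[OF assms(1,3,7)] by blast
  obtain hJ where hJ: "hJ ` J \<subseteq> B" "inj_on hJ J"
    using card_le_inj[OF assms(2,4,8)] by blast
  define h where "h j = (if j \<in> I then hI j else hJ j)" for j
  have "h ` I = hI ` I" "h ` J = hJ ` J"
    using assms(5) by (auto simp: h_def)
  moreover have "inj_on h I"
    using hI(2) by (subst inj_on_cong[of I h hI]) (auto simp: h_def)
  moreover have "inj_on h J"
    using hJ(2) assms(5) by (subst inj_on_cong[of J h hJ]) (auto simp: h_def)
  ultimately have "inj_on h (I \<union> J)"
    using hI(1) hJ(1) assms(6) unfolding inj_on_Un by blast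
  then show thesis
    using that hI(1) hJ(1) \<open>h ` I = hI ` I\<close> \<open>h ` J = hJ ` J\<close> by simp
qed

lemma ex_assignment_preserving_pair_preference:
  assumes wf: "wf_profile P" and xy: "x \<in> cands P" "y \<in> cands P" "x \<noteq> y"
    and J: "finite J" "\<And>j. j \<in> J \<Longrightarrow> strict_linear_order_on C (B j)" "x \<in> C" "y \<in> C"
    and fewer: "card {j \<in> J. (y, x) \<in> B j} \<le> card {v \<in> voters P. (y, x) \<in> ballot P v}"
    and same_margin: "(\<Sum>j\<in>J. ballot_margin (B j) x y) = margin P x y"
  obtains h where "inj_on h J" "h ` J \<subseteq> voters P"
    "\<And>j. j \<in> J \<Longrightarrow> (x, y) \<in> ballot P (h j) \<longleftrightarrow> (x, y) \<in> B j"
    "card {v \<in> voters P - h ` J. (x, y) \<in> ballot P v} = card {v \<in> voters P - h ` J. (y, x) \<in> ballot P v}"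
proof -
  let ?Vxy = "{v \<in> voters P. (x, y) \<in> ballot P v}" and ?Vyx = "{v \<in> voters P. (y, x) \<in> ballot P v}"
  let ?Jxy = "{j \<in> J. (x, y) \<in> B j}" and ?Jyx = "{j \<in> J. (y, x) \<in> B j}"
  have fin: "finite (voters P)"
    using wf_profileD[OF wf] by simp
  have flip_P: "(y, x) \<in> ballot P v \<longleftrightarrow> (x, y) \<notin> ballot P v" if "v \<in> voters P" for v
    using strict_linear_order_on_flip_iff[OF wf_profile_ballotD(1)[OF wf that] xy] .
  have flip_J: "(y, x) \<in> B j \<longleftrightarrow> (x, y) \<notin> B j" if "j \<in> J" for j
    using strict_linear_order_on_flip_iff[OF J(2)[OF that] J(3,4) xy(3)] .
  have "int (card ?Jxy) - int (card ?Jyx) = int (card ?Vxy) - int (card ?Vyx)"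
    using same_margin[unfolded margin_def] sum_ballot_margin[OF J(1), of B x y] by linarith
  then have "card ?Jxy \<le> card ?Vxy"
    using fewer by linarith
  moreover have "?Jxy \<inter> ?Jyx = {}" "?Vxy \<inter> ?Vyx = {}"
    using flip_P flip_J by blast+
  ultimately obtain h where h: "inj_on h (?Jxy \<union> ?Jyx)" "h ` ?Jxy \<subseteq> ?Vxy" "h ` ?Jyx \<subseteq> ?Vyx"
    using ex_inj_on_into_parts[of ?Jxy ?Jyx ?Vxy ?Vyx] fewer J(1) fin by auto
  have J_eq: "J = ?Jxy \<union> ?Jyx"
    using flip_J by blast
  then have hJ: "h ` J = h ` ?Jxy \<union> h ` ?Jyx"
    by (metis image_Un)
  have pref: "(x, y) \<in> ballot P (h j) \<longleftrightarrow> (x, y) \<in> B j" if "j \<in> J" for j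
    using h(2,3) that flip_P flip_J by blast
  have "{v \<in> voters P - h ` J. (x, y) \<in> ballot P v} = ?Vxy - h ` ?Jxy"
    "{v \<in> voters P - h ` J. (y, x) \<in> ballot P v} = ?Vyx - h ` ?Jyx"
    unfolding hJ using h(2,3) flip_P by blast+
  moreover have "card (?Vxy - h ` ?Jxy) = card ?Vxy - card ?Jxy"
    "card (?Vyx - h ` ?Jyx) = card ?Vyx - card ?Jyx"
    using h fin J(1) by (simp_all add: card_Diff_subset card_image inj_on_Un)
  ultimately have "card {v \<in> voters P - h ` J. (x, y) \<in> ballot P v} = card {v \<in> voters P - h ` J. (y, x) \<in> ballot P v}"
    using \<open>int (card ?Jxy) - int (card ?Jyx) = int (card ?Vxy) - int (card ?Vyx)\<close>
      \<open>card ?Jxy \<le> card ?Vxy\<close> fewer by simp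
  moreover have "inj_on h J" "h ` J \<subseteq> voters P"
    using h J_eq hJ by auto
  ultimately show thesis
    using that pref by blast
qed

lemma margin_with_reversal_pairs:
  assumes "finite (voters P)" "voters P = W \<union> R \<union> R'" "W \<inter> (R \<union> R') = {}" "R \<inter> R' = {}"
    and "card R = card R'" "\<And>v. v \<in> R \<Longrightarrow> ballot P v = L" "\<And>v. v \<in> R' \<Longrightarrow> ballot P v = L\<inverse>"
  shows "margin P a b = (\<Sum>v\<in>W. ballot_margin (ballot P v) a b)"
proof -
  let ?m = "\<lambda>v. ballot_margin (ballot P v) a b"
  have fin: "finite W" "finite R" "finite R'"
    using assms(1,2) by auto
  have "margin P a b = sum ?m (W \<union> R) + sum ?m R'"
    unfolding margin_eq_sum[OF assms(1)] assms(2) using fin assms(3,4) by (intro sum.union_disjoint) auto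
  also have "sum ?m (W \<union> R) = sum ?m W + sum ?m R"
    using fin assms(3) by (intro sum.union_disjoint) auto
  finally show ?thesis
    using assms(5-7) by (simp add: ballot_margin_converse)
qed

lemma ex_voter_partition_preserving_pair_preference:
  assumes wf: "wf_profile P" and xy: "x \<in> cands P" "y \<in> cands P" "x \<noteq> y"
    and J: "finite J" "\<And>j. j \<in> J \<Longrightarrow> strict_linear_order_on C (B j)" "x \<in> C" "y \<in> C"
    and fewer: "card {j \<in> J. (y, x) \<in> B j} \<le> card {v \<in> voters P. (y, x) \<in> ballot P v}"
    and same_margin: "(\<Sum>j\<in>J. ballot_margin (B j) x y) = margin P x y"
  obtains h g R where "inj_on h J" "inj_on g R" "voters P = h ` J \<union> R \<union> g ` R"
    "h ` J \<inter> (R \<union> g ` R) = {}" "R \<inter> g ` R = {}"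
    "\<And>j. j \<in> J \<Longrightarrow> (x, y) \<in> ballot P (h j) \<longleftrightarrow> (x, y) \<in> B j"
    "\<And>r. r \<in> R \<Longrightarrow> (x, y) \<in> ballot P r" "\<And>r. r \<in> R \<Longrightarrow> (y, x) \<in> ballot P (g r)"
proof -
  let ?V = "voters P"
  obtain h where h: "inj_on h J" "h ` J \<subseteq> ?V" "\<And>j. j \<in> J \<Longrightarrow> (x, y) \<in> ballot P (h j) \<longleftrightarrow> (x, y) \<in> B j"
    "card {v \<in> ?V - h ` J. (x, y) \<in> ballot P v} = card {v \<in> ?V - h ` J. (y, x) \<in> ballot P v}"
    using ex_assignment_preserving_pair_preference[OF wf xy J fewer same_margin] by blast
  define R where "R = {v \<in> ?V - h ` J. (x, y) \<in> ballot P v}"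
  define R' where "R' = {v \<in> ?V - h ` J. (y, x) \<in> ballot P v}"
  obtain g where g: "bij_betw g R R'"
    using finite_same_card_bij[of R R'] h(4) wf_profileD(1)[OF wf] unfolding R_def R'_def by auto
  have "(y, x) \<in> ballot P v \<longleftrightarrow> (x, y) \<notin> ballot P v" if "v \<in> ?V" for v
    using strict_linear_order_on_flip_iff[OF wf_profile_ballotD(1)[OF wf that] xy] .
  then have "?V = h ` J \<union> R \<union> R'" "h ` J \<inter> (R \<union> R') = {}" "R \<inter> R' = {}"
    using h(2) unfolding R_def R'_def by auto
  then have part: "?V = h ` J \<union> R \<union> g ` R" "h ` J \<inter> (R \<union> g ` R) = {}" "R \<inter> g ` R = {}"
    unfolding bij_betw_imp_surj_on[OF g] .
  have pref: "(x, y) \<in> ballot P r" "(y, x) \<in> ballot P (g r)" if "r \<in> R" for r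
    using that bij_betwE[OF g] unfolding R_def R'_def by auto
  show thesis
    by (rule that[OF h(1) bij_betw_imp_inj_on[OF g] part h(3) pref])
qed

lemma ex_profile_with_ballots_and_reversal_pairs:
  fixes P :: "('v, 'c) profile" and B :: "'j \<Rightarrow> 'c rel"
  assumes NR: "neutral_reversal F" and wf: "wf_profile P"
    and C: "C \<subseteq> cands P" "x \<in> C" "y \<in> C" "x \<noteq> y"
    and J: "finite J" "J \<noteq> {}" "\<And>j. j \<in> J \<Longrightarrow> strict_linear_order_on C (B j) \<and> B j \<subseteq> C \<times> C"
    and L: "strict_linear_order_on C L" "L \<subseteq> C \<times> C" "(x, y) \<in> L"
    and fewer: "card {j \<in> J. (y, x) \<in> B j} \<le> card {v \<in> voters P. (y, x) \<in> ballot P v}"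
    and same_margin: "(\<Sum>j\<in>J. ballot_margin (B j) x y) = margin P x y"
  obtains P' h where "wf_profile P'" "voters P' = voters P" "cands P' = C"
    "\<And>v. v \<in> voters P \<Longrightarrow> ballot P' v \<inter> {x, y} \<times> {x, y} = ballot P v \<inter> {x, y} \<times> {x, y}"
    "\<And>a b. margin P' a b = (\<Sum>j\<in>J. ballot_margin (B j) a b)"
    "inj_on h J" "h ` J \<subseteq> voters P" "\<And>j. j \<in> J \<Longrightarrow> ballot P' (h j) = B j"
    "F (restrict_voters P' (h ` J)) = F P'"
proof -
  let ?V = "voters P"
  have xy: "x \<in> cands P" "y \<in> cands P"
    using C by auto
  obtain h g R where h: "inj_on h J" "inj_on g R" "?V = h ` J \<union> R \<union> g ` R"
    "h ` J \<inter> (R \<union> g ` R) = {}" "R \<inter> g ` R = {}"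
    "\<And>j. j \<in> J \<Longrightarrow> (x, y) \<in> ballot P (h j) \<longleftrightarrow> (x, y) \<in> B j"
    "\<And>r. r \<in> R \<Longrightarrow> (x, y) \<in> ballot P r" "\<And>r. r \<in> R \<Longrightarrow> (y, x) \<in> ballot P (g r)"
    using ex_voter_partition_preserving_pair_preference[OF wf xy C(4) J(1) J(3)[THEN conjunct1] C(2,3)
        fewer same_margin] by blast
  \<comment> \<open>Each pair r, g r gets the ballots L and its converse, which keeps their preference between x and y.\<close>
  define P' where "P' = \<lparr>voters = ?V, cands = C, ballot = \<lambda>v.
    if v \<in> h ` J then B (the_inv_into J h v) else if v \<in> R then L else if v \<in> g ` R then L\<inverse> else {}\<rparr>"
  have [simp]: "voters P' = ?V" "cands P' = C"
    by (simp_all add: P'_def)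
  have P'_h: "ballot P' (h j) = B j" if "j \<in> J" for j
    using that h(1) by (simp add: P'_def the_inv_into_f_f)
  have P'_R: "ballot P' v = L" if "v \<in> R" for v
    using that h(4) by (auto simp: P'_def)
  have P'_gR: "ballot P' v = L\<inverse>" if "v \<in> g ` R" for v
    using that h(4,5) by (auto simp: P'_def)
  have cases_V: thesis if "v \<in> ?V" "\<And>j. j \<in> J \<Longrightarrow> v = h j \<Longrightarrow> thesis" "v \<in> R \<Longrightarrow> thesis"
    "\<And>r. r \<in> R \<Longrightarrow> v = g r \<Longrightarrow> thesis" for v thesis
    using that h(3) by blast
  have slo_P': "strict_linear_order_on C (ballot P' v) \<and> ballot P' v \<subseteq> C \<times> C" if "v \<in> ?V" for v
    using that
    by (rule cases_V) (use P'_h P'_R P'_gR J(3) L strict_linear_order_on_converse[OF L(1)] in auto)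
  have "ballot P' v = {}" if "v \<notin> ?V" for v
    using that h(3) by (auto simp: P'_def)
  then have wf': "wf_profile P'"
    unfolding wf_profile_def using slo_P' wf_profileD[OF wf] C finite_subset by auto
  have "(x, y) \<in> ballot P' v \<longleftrightarrow> (x, y) \<in> ballot P v" if "v \<in> ?V" for v
    using that
  proof (rule cases_V)
    fix r assume "r \<in> R" "v = g r"
    then show ?thesis
      using P'_gR h(8) strict_linear_order_on_flip_iff[OF L(1) C(2-4)]
        strict_linear_order_on_flip_iff[OF wf_profile_ballotD(1)[OF wf that] xy C(4)] L(3) by auto
  qed (use P'_h h(6,7) P'_R L(3) in auto)
  then have "ballot P' v \<inter> {x, y} \<times> {x, y} = ballot P v \<inter> {x, y} \<times> {x, y}" if "v \<in> ?V" for v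
    using strict_linear_order_on_Int_pair_eq[OF conjunct1[OF slo_P'[OF that]]
        wf_profile_ballotD(1)[OF wf that] C(2,3) xy C(4)] that by blast
  moreover have "margin P' a b = (\<Sum>j\<in>J. ballot_margin (B j) a b)" for a b
  proof -
    have "margin P' a b = (\<Sum>v\<in>h ` J. ballot_margin (ballot P' v) a b)"
      using wf_profileD(1)[OF wf] h(3-5) P'_R P'_gR card_image[OF h(2)]
      by (intro margin_with_reversal_pairs[where R = R and R' = "g ` R" and L = L]) simp_all
    then show ?thesis
      using sum.reindex[OF h(1), of "\<lambda>v. ballot_margin (ballot P' v) a b"] P'_h by simp
  qed
  moreover have "F (restrict_voters P' (h ` J)) = F P'"
  proof (rule neutral_reversal_remove_pairs[OF NR _ wf'])
    show "finite R"
      using wf_profileD(1)[OF wf] h(3) by (simp add: finite_Un)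
    show "\<forall>r\<in>R. ballot P' (g r) = (ballot P' r)\<inverse>"
      using P'_R P'_gR by simp
  qed (use J(2) h(2-5) in auto)
  ultimately show thesis
    using that[OF wf' _ _ _ _ h(1) _ P'_h] h(3) by auto
qed

section \<open>Cyclic profiles\<close>

locale candidate_cycle =
  fixes cs :: "'c list"
  assumes distinct_cs: "distinct cs" and length_cs: "3 \<le> length cs"
begin

abbreviation "k \<equiv> length cs"

definition next_pos :: "nat \<Rightarrow> nat" where
  "next_pos p = Suc p mod k"

definition offset :: "nat \<Rightarrow> nat \<Rightarrow> nat" where
  "offset i p = (if i \<le> p then p - i else p + k - i)"

definition rank :: "bool \<Rightarrow> nat \<Rightarrow> nat" where
  "rank reversed d = (if \<not> reversed then d else if d = 0 then k - 2 else if d = 1 then k - 1 else k - 1 - d)"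

definition ranked :: "(nat \<Rightarrow> nat) \<Rightarrow> 'c rel" where
  "ranked r = {(cs ! p, cs ! q) | p q. p < k \<and> q < k \<and> r p < r q}"

text \<open>\<open>cyclic_ballot False i\<close> ranks \<open>cs ! i > cs ! (i + 1) > \<dots> > cs ! (i - 1)\<close> (indices modulo \<open>k\<close>);
  \<open>cyclic_ballot True i\<close> is its reversal, except that \<open>cs ! i\<close> stays directly above \<open>cs ! (i + 1)\<close>.
  Together the two ballots have margin 2 on the edge from \<open>cs ! i\<close> to \<open>cs ! (i + 1)\<close> and cancel on
  every other pair.\<close>

definition cyclic_ballot :: "bool \<Rightarrow> nat \<Rightarrow> 'c rel" where
  "cyclic_ballot reversed i = ranked (\<lambda>p. rank reversed (offset i p))"

definition cycle_voters :: "nat \<Rightarrow> (nat \<times> bool \<times> nat) set" where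
  "cycle_voters m = {..<m} \<times> UNIV \<times> {..<k}"

definition cycle_ballot :: "nat \<times> bool \<times> nat \<Rightarrow> 'c rel" where
  "cycle_ballot = (\<lambda>(_, reversed, i). cyclic_ballot reversed i)"

lemma cs_not_Nil: "cs \<noteq> []"
  using length_cs by (cases cs) auto

lemma next_pos_eq: "p < k \<Longrightarrow> next_pos p = (if Suc p = k then 0 else Suc p)"
  by (simp add: next_pos_def)

lemma next_pos_less: "next_pos p < k"
  using length_cs unfolding next_pos_def by (intro mod_less_divisor) linarith

lemma bij_betw_next_pos: "bij_betw next_pos {..<k} {..<k}"
proof -
  have "inj_on next_pos {..<k}"
    by (auto simp: inj_on_def next_pos_eq split: if_splits)
  then show ?thesis
    using next_pos_less by (simp add: bij_betw_def endo_inj_surj image_subset_iff)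
qed

lemma nth_eq_nth_iff: "p < k \<Longrightarrow> q < k \<Longrightarrow> cs ! p = cs ! q \<longleftrightarrow> p = q"
  using distinct_cs by (simp add: nth_eq_iff_index_eq)

lemma ranked_iff: "p < k \<Longrightarrow> q < k \<Longrightarrow> (cs ! p, cs ! q) \<in> ranked r \<longleftrightarrow> r p < r q"
  unfolding ranked_def using nth_eq_nth_iff by auto

lemma ranked_subset: "ranked r \<subseteq> set cs \<times> set cs"
  unfolding ranked_def by auto

lemma strict_linear_order_on_ranked:
  assumes "inj_on r {..<k}"
  shows "strict_linear_order_on (set cs) (ranked r)"
  unfolding strict_linear_order_on_def
proof (intro conjI)
  show "trans (ranked r)"
  proof (rule transI)
    fix a b c assume "(a, b) \<in> ranked r" "(b, c) \<in> ranked r"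
    then obtain p q q' s where "a = cs ! p" "b = cs ! q" "b = cs ! q'" "c = cs ! s"
      "p < k" "q < k" "q' < k" "s < k" "r p < r q" "r q' < r s"
      unfolding ranked_def by blast
    then show "(a, c) \<in> ranked r"
      using nth_eq_nth_iff ranked_iff by (metis order.strict_trans)
  qed
  show "irrefl (ranked r)"
    unfolding irrefl_on_def ranked_def using nth_eq_nth_iff by auto
  show "total_on (set cs) (ranked r)"
    unfolding total_on_def
  proof (intro ballI impI)
    fix a b assume "a \<in> set cs" "b \<in> set cs" "a \<noteq> b"
    then obtain p q where "p < k" "q < k" "a = cs ! p" "b = cs ! q"
      by (auto simp: in_set_conv_nth)
    moreover have "r p \<noteq> r q"
      using assms calculation \<open>a \<noteq> b\<close> by (auto simp: inj_on_def)
    ultimately show "(a, b) \<in> ranked r \<or> (b, a) \<in> ranked r"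
      using ranked_iff by (auto simp: linorder_neq_iff)
  qed
qed

lemma ballot_margin_ranked:
  assumes "p < k" "q < k" "p \<noteq> q" "inj_on r {..<k}"
  shows "ballot_margin (ranked r) (cs ! p) (cs ! q) = (if r p < r q then 1 else -1)"
proof -
  have "r p \<noteq> r q"
    using assms by (auto simp: inj_on_def)
  then show ?thesis
    using assms(1,2) ranked_iff[of p q r] ranked_iff[of q p r] by (auto simp: ballot_margin_def)
qed

lemma offset_less: "i < k \<Longrightarrow> p < k \<Longrightarrow> offset i p < k"
  unfolding offset_def by auto

lemma inj_on_offset: "i < k \<Longrightarrow> inj_on (offset i) {..<k}"
  unfolding inj_on_def offset_def by auto

lemma offset_eq_0_iff: "i < k \<Longrightarrow> p < k \<Longrightarrow> offset i p = 0 \<longleftrightarrow> p = i"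
  unfolding offset_def by auto

lemma offset_eq_1_iff: "i < k \<Longrightarrow> p < k \<Longrightarrow> offset i p = 1 \<longleftrightarrow> p = next_pos i"
  using length_cs unfolding offset_def next_pos_eq by auto

lemma offset_next_pos: "i < k \<Longrightarrow> p < k \<Longrightarrow> offset (next_pos i) (next_pos p) = offset i p"
  unfolding offset_def next_pos_eq by auto

lemma inj_on_rank: "inj_on (rank reversed) {..<k}"
  using length_cs unfolding inj_on_def rank_def by auto

lemma inj_on_rank_offset: "i < k \<Longrightarrow> inj_on (\<lambda>p. rank reversed (offset i p)) {..<k}"
  using comp_inj_on[OF inj_on_offset inj_on_subset[OF inj_on_rank]] offset_less
  by (auto simp: comp_def)

lemma rank_pair:
  assumes "d < k" "e < k" "d \<noteq> e"
  shows "(if rank False d < rank False e then 1 else -1) + (if rank True d < rank True e then 1 else -1) =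
    (if d = 0 \<and> e = 1 then 2 else if d = 1 \<and> e = 0 then -2 else (0::int))"
  using assms length_cs unfolding rank_def by auto

lemma strict_linear_order_on_cyclic_ballot:
  "i < k \<Longrightarrow> strict_linear_order_on (set cs) (cyclic_ballot reversed i)"
  unfolding cyclic_ballot_def by (rule strict_linear_order_on_ranked[OF inj_on_rank_offset])

lemma cyclic_ballot_subset: "cyclic_ballot reversed i \<subseteq> set cs \<times> set cs"
  unfolding cyclic_ballot_def by (rule ranked_subset)

lemma ballot_margin_cyclic_ballot_pair:
  assumes "p < k" "q < k" "p \<noteq> q" "i < k"
  shows "ballot_margin (cyclic_ballot False i) (cs ! p) (cs ! q) +
      ballot_margin (cyclic_ballot True i) (cs ! p) (cs ! q) =
    (if p = i \<and> q = next_pos i then 2 else if q = i \<and> p = next_pos i then -2 else 0)"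
proof -
  have "offset i p \<noteq> offset i q" "offset i p < k" "offset i q < k"
    using assms inj_on_offset[of i] offset_less[of i] by (auto simp: inj_on_def)
  then show ?thesis
    unfolding cyclic_ballot_def
    using assms ballot_margin_ranked[OF assms(1-3) inj_on_rank_offset] rank_pair offset_eq_0_iff offset_eq_1_iff
    by auto
qed

lemma finite_cycle_voters: "finite (cycle_voters m)"
  by (simp add: cycle_voters_def)

lemma card_cycle_voters: "card (cycle_voters m) = m * (2 * k)"
  by (simp add: cycle_voters_def card_cartesian_product)

lemma strict_linear_order_on_cycle_ballot:
  "j \<in> cycle_voters m \<Longrightarrow> strict_linear_order_on (set cs) (cycle_ballot j)"
  by (auto simp: cycle_voters_def cycle_ballot_def strict_linear_order_on_cyclic_ballot)

lemma cycle_ballot_subset: "cycle_ballot j \<subseteq> set cs \<times> set cs"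
  by (auto simp: cycle_ballot_def cyclic_ballot_subset split: prod.splits)

lemma sum_ballot_margin_cycle_ballot:
  assumes "p < k" "q < k"
  shows "(\<Sum>j\<in>cycle_voters m. ballot_margin (cycle_ballot j) (cs ! p) (cs ! q)) =
    int m * ((if q = next_pos p then 2 else 0) - (if p = next_pos q then 2 else 0))"
proof (cases "p = q")
  case True
  then show ?thesis
    using next_pos_eq[OF assms(1)] length_cs by (simp add: ballot_margin_def)
next
  case False
  let ?m = "\<lambda>reversed i. ballot_margin (cyclic_ballot reversed i) (cs ! p) (cs ! q)"
  have "(\<Sum>j\<in>cycle_voters m. ballot_margin (cycle_ballot j) (cs ! p) (cs ! q)) =
      (\<Sum>c<m. \<Sum>reversed\<in>UNIV. \<Sum>i<k. ?m reversed i)"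
    unfolding cycle_voters_def sum.cartesian_product' by (simp add: cycle_ballot_def)
  also have "\<dots> = int m * (\<Sum>i<k. ?m False i + ?m True i)"
    by (simp add: UNIV_bool sum.distrib)
  also have "(\<Sum>i<k. ?m False i + ?m True i) =
      (\<Sum>i<k. (if i = p then (if q = next_pos p then 2 else 0) else 0) -
        (if i = q then (if p = next_pos q then 2 else 0) else 0))"
    using ballot_margin_cyclic_ballot_pair[OF assms False] False by (intro sum.cong) auto
  finally show ?thesis
    using assms by (simp add: sum_subtractf)
qed

definition rotate_cand :: "'c \<Rightarrow> 'c" where
  "rotate_cand a = cs ! next_pos (the_inv_into {..<k} ((!) cs) a)"

lemma bij_betw_nth_cs: "bij_betw ((!) cs) {..<k} (set cs)"
  using distinct_cs by (rule bij_betw_nth) simp_all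

lemma rotate_cand_nth: "p < k \<Longrightarrow> rotate_cand (cs ! p) = cs ! next_pos p"
  unfolding rotate_cand_def using the_inv_into_f_f[OF bij_betw_imp_inj_on[OF bij_betw_nth_cs]] by simp

lemma bij_betw_rotate_cand: "bij_betw rotate_cand (set cs) (set cs)"
proof -
  have "bij_betw (((!) cs \<circ> next_pos) \<circ> the_inv_into {..<k} ((!) cs)) (set cs) (set cs)"
    using bij_betw_the_inv_into[OF bij_betw_nth_cs] bij_betw_next_pos bij_betw_nth_cs
    by (blast intro: bij_betw_trans)
  then show ?thesis
    by (simp add: comp_def rotate_cand_def[abs_def])
qed

lemma image_ranked_rotate_cand:
  assumes "\<And>p. p < k \<Longrightarrow> r' (next_pos p) = r p"
  shows "(\<lambda>(a, b). (rotate_cand a, rotate_cand b)) ` ranked r = ranked r'"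
proof (intro equalityI subsetI)
  fix z assume "z \<in> (\<lambda>(a, b). (rotate_cand a, rotate_cand b)) ` ranked r"
  then obtain p q where "p < k" "q < k" "r p < r q" "z = (rotate_cand (cs ! p), rotate_cand (cs ! q))"
    unfolding ranked_def by auto
  then show "z \<in> ranked r'"
    using assms rotate_cand_nth next_pos_less ranked_iff by simp
next
  fix z assume "z \<in> ranked r'"
  then obtain p' q' where "p' < k" "q' < k" "r' p' < r' q'" "z = (cs ! p', cs ! q')"
    unfolding ranked_def by auto
  moreover have "p' \<in> next_pos ` {..<k}" "q' \<in> next_pos ` {..<k}"
    using bij_betw_imp_surj_on[OF bij_betw_next_pos] calculation by auto
  then obtain p q where "p < k" "q < k" "p' = next_pos p" "q' = next_pos q"
    by blast
  ultimately have "(cs ! p, cs ! q) \<in> ranked r" "z = (rotate_cand (cs ! p), rotate_cand (cs ! q))"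
    using assms ranked_iff rotate_cand_nth by auto
  then show "z \<in> (\<lambda>(a, b). (rotate_cand a, rotate_cand b)) ` ranked r"
    by (auto intro: rev_image_eqI)
qed

lemma image_cyclic_ballot_rotate_cand:
  "i < k \<Longrightarrow> (\<lambda>(a, b). (rotate_cand a, rotate_cand b)) ` cyclic_ballot reversed i =
    cyclic_ballot reversed (next_pos i)"
  unfolding cyclic_ballot_def by (rule image_ranked_rotate_cand) (simp add: offset_next_pos)

lemma cycle_profile_rotate_cand:
  assumes A: "anonymity F" and N: "neutrality F"
    and wf: "wf_profile Q" and cands: "cands Q = set cs"
    and h: "bij_betw h (cycle_voters m) (voters Q)"
    and ballot: "\<And>j. j \<in> cycle_voters m \<Longrightarrow> ballot Q (h j) = cycle_ballot j"
    and a: "a \<in> set cs" "a \<in> F Q"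
  shows "rotate_cand a \<in> F Q"
proof -
  let ?rot = "map_prod id (map_prod id next_pos)"
  have rot: "bij_betw ?rot (cycle_voters m) (cycle_voters m)"
    unfolding cycle_voters_def by (intro bij_betw_map_prod bij_betw_id bij_betw_next_pos)
  define \<sigma> where "\<sigma> = (h \<circ> ?rot) \<circ> the_inv_into (cycle_voters m) h"
  have \<sigma>: "bij_betw \<sigma> (voters Q) (voters Q)"
    unfolding \<sigma>_def by (rule bij_betw_trans[OF bij_betw_the_inv_into[OF h] bij_betw_trans[OF rot h]])
  have "ballot Q (\<sigma> v) = (\<lambda>(a, b). (rotate_cand a, rotate_cand b)) ` ballot Q v" if "v \<in> voters Q" for v
  proof -
    have "v \<in> h ` cycle_voters m"
      using that bij_betw_imp_surj_on[OF h] by simp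
    then obtain c reversed i where j: "(c, reversed, i) \<in> cycle_voters m" "v = h (c, reversed, i)"
      by (metis imageE prod_cases3)
    then have "\<sigma> v = h (c, reversed, next_pos i)"
      using bij_betw_imp_inj_on[OF h] by (simp add: \<sigma>_def the_inv_into_f_f)
    moreover have "(c, reversed, next_pos i) \<in> cycle_voters m"
      using next_pos_less j(1) by (simp add: cycle_voters_def)
    ultimately show ?thesis
      using j ballot image_cyclic_ballot_rotate_cand by (simp add: cycle_voters_def cycle_ballot_def)
  qed
  then show ?thesis
    using anonymity_neutrality_invariant[OF A N wf bij_betw_rotate_cand[folded cands] \<sigma>] a cands
    by blast
qed

lemma rotate_cand_closed_eq:
  assumes "S \<subseteq> set cs" "S \<noteq> {}" "\<And>a. a \<in> S \<Longrightarrow> rotate_cand a \<in> S"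
  shows "S = set cs"
proof -
  obtain a where "a \<in> S"
    using assms(2) by blast
  then obtain p where "p < k" "cs ! p \<in> S"
    using assms(1) by (metis in_set_conv_nth subsetD)
  have reached: "cs ! ((p + n) mod k) \<in> S" for n
  proof (induction n)
    case 0
    then show ?case
      using \<open>p < k\<close> \<open>cs ! p \<in> S\<close> by simp
  next
    case (Suc n)
    have "(p + n) mod k < k"
      using length_cs by (intro mod_less_divisor) linarith
    then show ?case
      using assms(3)[OF Suc.IH] rotate_cand_nth by (simp add: next_pos_def mod_Suc_eq)
  qed
  have "cs ! q \<in> S" if "q < k" for q
  proof -
    have "(p + (k - p + q)) mod k = q"
      using that \<open>p < k\<close> by simp
    then show ?thesis
      using reached[of "k - p + q"] by simp
  qed
  then show ?thesis
    using assms(1) by (auto simp: in_set_conv_nth)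
qed

lemma cycle_profile_winners:
  assumes A: "anonymity F" and N: "neutrality F" and V: "VSCC F"
    and wf: "wf_profile Q" and cands: "cands Q = set cs"
    and h: "bij_betw h (cycle_voters m) (voters Q)"
    and ballot: "\<And>j. j \<in> cycle_voters m \<Longrightarrow> ballot Q (h j) = cycle_ballot j"
  shows "F Q = set cs"
  using VSCC_D[OF V wf] cycle_profile_rotate_cand[OF A N wf cands h ballot] cands
  by (intro rotate_cand_closed_eq) auto

lemma sum_ballot_margin_cycle_ballot_last_hd:
  "(\<Sum>j\<in>cycle_voters m. ballot_margin (cycle_ballot j) (cs ! (k - 1)) (cs ! 0)) = 2 * int m"
proof -
  have "k - 1 < k" "0 < k" "k - 1 \<noteq> 1" "cs \<noteq> []"
    using length_cs cs_not_Nil by simp_all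
  then show ?thesis
    using sum_ballot_margin_cycle_ballot[of "k - 1" 0 m] length_cs by (simp add: next_pos_eq)
qed

lemma card_cycle_voters_prefer_hd_last:
  "card {j \<in> cycle_voters m. (cs ! 0, cs ! (k - 1)) \<in> cycle_ballot j} = m * (k - 1)"
proof -
  let ?xy = "{j \<in> cycle_voters m. (cs ! (k - 1), cs ! 0) \<in> cycle_ballot j}"
    and ?yx = "{j \<in> cycle_voters m. (cs ! 0, cs ! (k - 1)) \<in> cycle_ballot j}"
  have "card ?xy + card ?yx = m * (2 * k)"
    using card_prefers_add_card_prefers[where a = "cs ! (k - 1)" and b = "cs ! 0",
        OF finite_cycle_voters strict_linear_order_on_cycle_ballot]
      length_cs cs_not_Nil nth_eq_nth_iff[of "k - 1" 0] by (simp add: card_cycle_voters)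
  moreover have "int (card ?xy) - int (card ?yx) = 2 * int m"
    using sum_ballot_margin_cycle_ballot_last_hd[of m]
      sum_ballot_margin[OF finite_cycle_voters, of cycle_ballot "cs ! (k - 1)" "cs ! 0" m] by linarith
  ultimately show ?thesis
    using length_cs by (simp add: algebra_simps)
qed

lemma sum_ballot_margin_cycle_ballot_le:
  assumes path: "\<And>i. Suc i < k \<Longrightarrow> margin P (last cs) (hd cs) \<le> margin P (cs ! i) (cs ! Suc i)"
    and margin_last_hd: "margin P (last cs) (hd cs) = 2 * int m"
    and "a \<in> set cs" "b \<in> set cs" and pos: "0 < (\<Sum>j\<in>cycle_voters m. ballot_margin (cycle_ballot j) a b)"
  shows "(\<Sum>j\<in>cycle_voters m. ballot_margin (cycle_ballot j) a b) \<le> margin P a b"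
proof -
  obtain p q where pq: "p < k" "q < k" "a = cs ! p" "b = cs ! q"
    using \<open>a \<in> set cs\<close> \<open>b \<in> set cs\<close> by (auto simp: in_set_conv_nth)
  then have "q = next_pos p" and sum_eq: "(\<Sum>j\<in>cycle_voters m. ballot_margin (cycle_ballot j) a b) = 2 * int m"
    using pos sum_ballot_margin_cycle_ballot[of p q m] next_pos_eq length_cs
    by (auto split: if_splits)
  have "last cs = cs ! (k - 1)" "hd cs = cs ! 0"
    using cs_not_Nil by (simp_all add: last_conv_nth hd_conv_nth)
  have "2 * int m \<le> margin P a b"
  proof (cases "Suc p = k")
    case True
    then have "p = k - 1" "q = 0"
      using \<open>q = next_pos p\<close> next_pos_eq[OF pq(1)] by simp_all
    then show ?thesis
      using margin_last_hd pq \<open>last cs = cs ! (k - 1)\<close> \<open>hd cs = cs ! 0\<close> by simp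
  next
    case False
    then have "q = Suc p" "Suc p < k"
      using \<open>q = next_pos p\<close> next_pos_eq[OF pq(1)] pq(1) by simp_all
    then show ?thesis
      using path[of p] margin_last_hd pq by simp
  qed
  then show ?thesis
    using sum_eq by simp
qed

lemma ex_coherent_step_electing_hd:
  fixes P :: "('v, 'c) profile"
  assumes A: "anonymity F" and N: "neutrality F" and NR: "neutral_reversal F" and V: "VSCC F"
    and wf: "wf_profile P" and cs_P: "set cs \<subseteq> cands P"
    and path: "\<And>i. Suc i < k \<Longrightarrow> margin P (last cs) (hd cs) \<le> margin P (cs ! i) (cs ! Suc i)"
    and margin_last_hd: "margin P (last cs) (hd cs) = 2 * int m" and "0 < m"
    and enough: "m * (k - 1) \<le> card {v \<in> voters P. (hd cs, last cs) \<in> ballot P v}"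
  obtains P' where "wf_profile P'" "coherent_step P (last cs) (hd cs) P'" "hd cs \<in> F P'"
proof -
  let ?x = "cs ! (k - 1)" and ?y = "cs ! 0" and ?J = "cycle_voters m"
  have ends: "last cs = ?x" "hd cs = ?y"
    using cs_not_Nil by (simp_all add: last_conv_nth hd_conv_nth)
  have xy: "?x \<in> set cs" "?y \<in> set cs" "?x \<noteq> ?y"
    using length_cs cs_not_Nil nth_eq_nth_iff[of "k - 1" 0] by (simp_all add: nth_mem)
  have L: "strict_linear_order_on (set cs) (cyclic_ballot False (k - 1))"
    "cyclic_ballot False (k - 1) \<subseteq> set cs \<times> set cs"
    using length_cs by (simp_all add: strict_linear_order_on_cyclic_ballot cyclic_ballot_subset)
  have L_xy: "(?x, ?y) \<in> cyclic_ballot False (k - 1)"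
    unfolding cyclic_ballot_def using length_cs by (subst ranked_iff) (auto simp: rank_def offset_def)
  have J: "\<And>j. j \<in> ?J \<Longrightarrow> strict_linear_order_on (set cs) (cycle_ballot j) \<and> cycle_ballot j \<subseteq> set cs \<times> set cs"
    using strict_linear_order_on_cycle_ballot cycle_ballot_subset by blast
  have "(0, False, 0) \<in> ?J"
    using \<open>0 < m\<close> cs_not_Nil by (simp add: cycle_voters_def)
  moreover have "card {j \<in> ?J. (?y, ?x) \<in> cycle_ballot j} \<le> card {v \<in> voters P. (?y, ?x) \<in> ballot P v}"
    using enough ends card_cycle_voters_prefer_hd_last by simp
  moreover have "(\<Sum>j\<in>?J. ballot_margin (cycle_ballot j) ?x ?y) = margin P ?x ?y"
    using sum_ballot_margin_cycle_ballot_last_hd margin_last_hd ends by simp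
  ultimately obtain P' h where P': "wf_profile P'" "voters P' = voters P" "cands P' = set cs"
    "\<And>v. v \<in> voters P \<Longrightarrow> ballot P' v \<inter> {?x, ?y} \<times> {?x, ?y} = ballot P v \<inter> {?x, ?y} \<times> {?x, ?y}"
    "\<And>a b. margin P' a b = (\<Sum>j\<in>?J. ballot_margin (cycle_ballot j) a b)"
    "inj_on h ?J" "h ` ?J \<subseteq> voters P" "\<And>j. j \<in> ?J \<Longrightarrow> ballot P' (h j) = cycle_ballot j"
    "F (restrict_voters P' (h ` ?J)) = F P'"
    using ex_profile_with_ballots_and_reversal_pairs[where J = ?J and B = cycle_ballot,
        OF NR wf cs_P xy finite_cycle_voters _ J L L_xy]
    by blast
  have "coherent_step P ?x ?y P'"
    using P'(1-5) cs_P xy sum_ballot_margin_cycle_ballot_le[OF path margin_last_hd]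
    by (intro coherent_stepI) auto
  moreover have "F P' = set cs"
  proof -
    let ?Q = "restrict_voters P' (h ` ?J)"
    have "wf_profile ?Q"
      using P'(2,7) \<open>(0, False, 0) \<in> ?J\<close> by (intro wf_profile_restrict_voters[OF P'(1)]) auto
    moreover have "bij_betw h ?J (voters ?Q)"
      using inj_on_imp_bij_betw[OF P'(6)] by simp
    ultimately have "F ?Q = set cs"
      using cycle_profile_winners[OF A N V] P'(3,8) by simp
    then show ?thesis
      using P'(9) by simp
  qed
  ultimately show thesis
    using that P'(1) ends xy(2) by simp
qed

end

section \<open>Coherent steps electing an undefeated candidate\<close>

lemma ex_coherent_step_electing_majority_winner:
  fixes F :: "('v, 'c) profile \<Rightarrow> 'c set" and P :: "('v, 'c) profile"
  assumes inf: "infinite (UNIV :: 'v set)"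
    and V: "VSCC F" and A: "anonymity F" and N: "neutrality F" and U: "upward_homogeneity F"
    and M: "monotonicity_two F"
    and wf: "wf_profile P" and xy: "x \<in> cands P" "y \<in> cands P" and "margin P x y \<le> 0"
  shows "\<exists>P'. wf_profile P' \<and> coherent_step P x y P' \<and> y \<in> F P'"
proof -
  let ?P' = "restrict_cands P {x, y}"
  have wf': "wf_profile ?P'" and "coherent_step P x y ?P'"
    using xy by (auto intro: wf_profile_restrict_cands[OF wf] coherent_step_restrict_cands)
  moreover have "y \<in> F ?P'"
  proof (cases "x = y")
    case True
    then show ?thesis
      using VSCC_D[OF V wf'] by auto
  next
    case False
    have "margin ?P' y x = margin P y x"
      by (intro margin_eq_if_Int_pair_eq) auto
    then show ?thesis
      using two_candidate_weak_majority_winner[OF A N V M U inf wf', of x y] False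
        \<open>margin P x y \<le> 0\<close> margin_antisym[of P x y] by simp
  qed
  ultimately show ?thesis
    by blast
qed

lemma ex_coherent_step_electing_undefeated:
  fixes F :: "('v, 'c) profile \<Rightarrow> 'c set" and P :: "('v, 'c) profile"
  assumes V: "VSCC F" and A: "anonymity F" and N: "neutrality F" and NR: "neutral_reversal F"
    and wf: "wf_profile P" and y: "y \<in> split_cycle P" and "x \<in> cands P" and pos: "0 < margin P x y"
    and even: "even (margin P x y)"
    and padded: "margin P x y * int (card (cands P)) \<le> int (card {v \<in> voters P. (y, x) \<in> ballot P v})"
  shows "\<exists>P'. wf_profile P' \<and> coherent_step P x y P' \<and> y \<in> F P'"
proof -
  obtain cs where cs: "distinct cs" "3 \<le> length cs" "hd cs = y" "last cs = x" "set cs \<subseteq> cands P"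
    and path: "\<And>i. Suc i < length cs \<Longrightarrow> margin P x y \<le> margin P (cs ! i) (cs ! Suc i)"
    using split_cycle_strong_path[OF y pos] by blast
  interpret candidate_cycle cs
    using cs(1,2) by unfold_locales
  obtain c where "margin P x y = 2 * c"
    using even by (elim evenE)
  moreover have "0 < c"
    using pos calculation by simp
  ultimately obtain m where m: "margin P x y = 2 * int m" and "0 < m"
    by (intro that[of "nat c"]) simp_all
  have "length cs \<le> card (cands P)"
    using card_mono[OF wf_profileD(3)[OF wf] cs(5)] distinct_card[OF cs(1)] by simp
  then have "int (m * (length cs - 1)) \<le> margin P x y * int (card (cands P))"
    unfolding m by (simp add: mult_mono)
  also note padded
  finally have "m * (length cs - 1) \<le> card {v \<in> voters P. (y, x) \<in> ballot P v}"
    by (simp only: of_nat_le_iff)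
  then show ?thesis
    using ex_coherent_step_electing_hd[OF A N NR V wf cs(5), of m, unfolded cs(3,4)] path m \<open>0 < m\<close>
    by blast
qed

lemma split_cycle_winner_if_even_and_padded:
  fixes F :: "('v, 'c) profile \<Rightarrow> 'c set" and P :: "('v, 'c) profile"
  assumes inf: "infinite (UNIV :: 'v set)"
    and V: "VSCC F" and A: "anonymity F" and N: "neutrality F" and U: "upward_homogeneity F"
    and NR: "neutral_reversal F" and M: "monotonicity_two F" and CI: "coherent_IIA F"
    and wf: "wf_profile P" and y: "y \<in> split_cycle P"
    and even: "\<And>a b. even (margin P a b)"
    and padded: "\<And>x. x \<in> cands P \<Longrightarrow> x \<noteq> y \<Longrightarrow>
      margin P x y * int (card (cands P)) \<le> int (card {v \<in> voters P. (y, x) \<in> ballot P v})"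
  shows "y \<in> F P"
proof (rule ccontr)
  assume "y \<notin> F P"
  moreover have "y \<in> cands P"
    using y by (simp add: split_cycle_def)
  ultimately obtain x where "x \<in> cands P"
    and x: "\<forall>P'. wf_profile P' \<and> coherent_step P x y P' \<longrightarrow> y \<notin> F P'"
    using CI wf unfolding coherent_IIA_def by blast
  have "\<exists>P'. wf_profile P' \<and> coherent_step P x y P' \<and> y \<in> F P'"
  proof (cases "margin P x y \<le> 0")
    case True
    then show ?thesis
      using ex_coherent_step_electing_majority_winner[OF inf V A N U M wf \<open>x \<in> cands P\<close> \<open>y \<in> cands P\<close>]
      by blast
  next
    case False
    then have "x \<noteq> y"
      using margin_antisym[of P x x] by auto
    then show ?thesis
      using False ex_coherent_step_electing_undefeated[OF V A N NR wf y \<open>x \<in> cands P\<close> _ even]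
        padded[OF \<open>x \<in> cands P\<close>] by simp
  qed
  then show False
    using x by blast
qed

lemma ex_even_padded_profile:
  fixes F :: "('v, 'c) profile \<Rightarrow> 'c set" and P :: "('v, 'c) profile"
  assumes inf: "infinite (UNIV :: 'v set)" and U: "upward_homogeneity F" and NR: "neutral_reversal F"
    and wf: "wf_profile P"
  obtains P1 where "wf_profile P1" "split_cycle P1 = split_cycle P" "F P1 \<subseteq> F P"
    "\<And>a b. even (margin P1 a b)"
    "\<And>x y. x \<in> cands P1 \<Longrightarrow> y \<in> cands P1 \<Longrightarrow> x \<noteq> y \<Longrightarrow>
      margin P1 x y * int (card (cands P1)) \<le> int (card {v \<in> voters P1. (y, x) \<in> ballot P1 v})"
proof -
  obtain P2 where P2: "wf_profile P2" "doubling P P2"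
    using ex_doubling[OF wf inf] by blast
  have margin_P2: "margin P2 a b = 2 * margin P a b" for a b
    by (rule margin_doubling[OF wf P2])
  obtain P1 where P1: "wf_profile P1" "cands P1 = cands P2" "F P1 = F P2" "\<forall>a b. margin P1 a b = margin P2 a b"
    "\<forall>x\<in>cands P2. \<forall>y\<in>cands P2. x \<noteq> y \<longrightarrow>
       card (voters P2) * card (cands P2) \<le> card {v \<in> voters P1. (y, x) \<in> ballot P1 v}"
    using ex_reversal_padding[OF NR P2(1) inf] by blast
  have "split_cycle P1 = split_cycle P"
    using split_cycle_scale[of P1 P 2] P1(2,4) P2(2) margin_P2 by (simp add: doubling_def)
  moreover have "F P1 \<subseteq> F P"
    using U P1(3) wf P2 unfolding upward_homogeneity_def by blast
  moreover have "margin P1 x y * int (card (cands P1)) \<le> int (card {v \<in> voters P1. (y, x) \<in> ballot P1 v})"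
    if "x \<in> cands P1" "y \<in> cands P1" "x \<noteq> y" for x y
  proof -
    have "margin P1 x y \<le> int (card (voters P2))"
      using P1(4) margin_le_card_voters[OF wf_profileD(1)[OF P2(1)]] by simp
    then have "margin P1 x y * int (card (cands P1)) \<le> int (card (voters P2) * card (cands P2))"
      using P1(2) by (simp add: mult_right_mono)
    also have "\<dots> \<le> int (card {v \<in> voters P1. (y, x) \<in> ballot P1 v})"
      unfolding of_nat_le_iff using P1(2,5) that by simp
    finally show ?thesis .
  qed
  ultimately show thesis
    using that P1(1,4) margin_P2 by simp
qed

theorem theorem6p4:
  fixes F :: "('v, 'c) profile \<Rightarrow> 'c set"
  assumes "infinite (UNIV :: 'v set)" and "infinite (UNIV :: 'c set)"
    and "VSCC F" and "anonymity F" and "neutrality F" and "upward_homogeneity F"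
    and "neutral_reversal F" and "monotonicity_two F" and "coherent_IIA F"
  shows "\<forall>P. wf_profile P \<longrightarrow> split_cycle P \<subseteq> F P"
proof (intro allI impI subsetI)
  fix P :: "('v, 'c) profile" and y
  assume wf: "wf_profile P" and y: "y \<in> split_cycle P"
  obtain P1 where P1: "wf_profile P1" "split_cycle P1 = split_cycle P" "F P1 \<subseteq> F P"
    "\<And>a b. even (margin P1 a b)"
    "\<And>x y. x \<in> cands P1 \<Longrightarrow> y \<in> cands P1 \<Longrightarrow> x \<noteq> y \<Longrightarrow>
      margin P1 x y * int (card (cands P1)) \<le> int (card {v \<in> voters P1. (y, x) \<in> ballot P1 v})"
    using ex_even_padded_profile[OF assms(1,6,7) wf] by blast
  have y1: "y \<in> split_cycle P1"
    using y P1(2) by simp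
  then have "y \<in> cands P1"
    by (simp add: split_cycle_def)
  then have "y \<in> F P1"
    using split_cycle_winner_if_even_and_padded[OF assms(1,3-9) P1(1) y1 P1(4)] P1(5) by blast
  then show "y \<in> F P"
    using P1(3) by blast
qed

end
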